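(* Let $\mathbf x=(k,S,\Lambda,\mathbf a)$ be an abelian group $k$-parameter and $G=G_{\mathbf x}$. (1) If $U\subseteq{}^\omega S$, $u\subseteq{}^\omega S\setminus U$ is finite, $j\le k$, $|u|\le j$ and $|U|\le\aleph_{k-j}$, then the abelian group $G_{U\cup u}/G_{U,u}$ is free. (2) If $U\subseteq{}^\omega S$ and $|U|\le\aleph_k$, then $G_U$ is free.
   Context: For a set $S$, ${}^\omega S$ is the set of all functions $\omega\to S$. An abelian group $k$-parameter is $\mathbf x=(k,S,\Lambda,\mathbf a)$ with $k<\omega$, $S$ a set, $\Lambda\subseteq {}^{k+1}({}^\omega S)$ (sequences $\bar\eta=\langle\eta_0,\dots,\eta_k\rangle$, $\eta_\ell\in{}^\omega S$) and $\mathbf a:\Lambda\times\omega\to\mathbb Z$, $\mathbf a_{\bar\eta,n}=\mathbf a(\bar\eta,n)$. For $\bar\eta\in\Lambda$, $m\le k$, $n<\omega$, $\bar\eta\upharpoonleft\langle m,n\rangle$ is the sequence obtained from $\bar\eta$ by replacing $\eta_m$ with $\eta_m\restriction n$. $\Lambda_m=\{\bar\eta\upharpoonleft\langle m,n\rangle:\bar\eta\in\Lambda,n<\omega\}$, $\Lambda_{\le k}=\bigcup_{m\le k}\Lambda_m$. $G_{\mathbf x}$ is the abelian group generated by $z$, $x_{\bar\nu}$ ($\bar\nu\in\Lambda_{\le k}$), $y_{\bar\eta,n}$ ($\bar\eta\in\Lambda,n<\omega$) freely except for the relations $(n!)y_{\bar\eta,n+1}=y_{\bar\eta,n}+\mathbf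 a_{\bar\eta,n}z+\sum_{m\le k}x_{\bar\eta\upharpoonleft\langle m,n\rangle}$ ($\bar\eta\in\Lambda$, $n<\omega$). For $U\subseteq{}^\omega S$, $G_U$ is the subgroup of $G_{\mathbf x}$ generated by $\{z\}\cup\{y_{\bar\eta,n}:\bar\eta\in\Lambda\cap{}^{k+1}U,n<\omega\}\cup\{x_{\bar\eta\upharpoonleft\langle m,n\rangle}:\bar\eta\in\Lambda\cap{}^{k+1}U,m\le k,n<\omega\}$. For $U\subseteq{}^\omega S$ and finite $u\subseteq{}^\omega S$, $G_{U,u}$ is the subgroup of $G_{\mathbf x}$ generated by $\bigcup_{\eta\in u}G_{U\cup(u\setminus\{\eta\})}$ (so $G_{U,\emptyset}=\{0\}$). *)

theory Defs
  imports "HOL-Algebra.Free_Abelian_Groups"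
begin

(* A point of ^omega S is a function nat => 's; a (k+1)-tuple of such is a list of length k+1. *)
type_synonym 's tup = "(nat \<Rightarrow> 's) list"
(* a tuple in which one coordinate has been replaced by a finite initial segment *)
type_synonym 's ptup = "((nat \<Rightarrow> 's) + 's list) list"

definition ab_param :: "nat \<Rightarrow> 's set \<Rightarrow> 's tup set \<Rightarrow> bool" where
  "ab_param k S Lam \<longleftrightarrow> (\<forall>\<eta>\<in>Lam. length \<eta> = Suc k \<and> (\<forall>i<Suc k. range (\<eta> ! i) \<subseteq> S))"

definition restr :: "'s tup \<Rightarrow> nat \<Rightarrow> nat \<Rightarrow> 's ptup" where
  "restr \<eta> m n = map (\<lambda>i. if i = m then Inr (map (\<eta> ! i) [0..<n]) else Inl (\<eta> ! i)) [0..<length \<eta>]"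

definition Lambda_le :: "nat \<Rightarrow> 's tup set \<Rightarrow> 's ptup set" where
  "Lambda_le k Lam = {restr \<eta> m n | \<eta> m n. \<eta> \<in> Lam \<and> m \<le> k}"

datatype 's gen = GZ | GX "'s ptup" | GY "'s tup" nat

definition gens :: "nat \<Rightarrow> 's tup set \<Rightarrow> 's gen set" where
  "gens k Lam = {GZ} \<union> GX ` Lambda_le k Lam \<union> {GY \<eta> n | \<eta> n. \<eta> \<in> Lam}"

definition FG :: "nat \<Rightarrow> 's tup set \<Rightarrow> ('s gen \<Rightarrow>\<^sub>0 int) monoid" where
  "FG k Lam = free_Abelian_group (gens k Lam)"

definition rel_elem :: "nat \<Rightarrow> ('s tup \<Rightarrow> nat \<Rightarrow> int) \<Rightarrow> 's tup \<Rightarrow> nat \<Rightarrow> ('s gen \<Rightarrow>\<^sub>0 int)" where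
  "rel_elem k a \<eta> n =
     Poly_Mapping.single (GY \<eta> (Suc n)) (int (fact n)) - Poly_Mapping.single (GY \<eta> n) 1
     - Poly_Mapping.single GZ (a \<eta> n) - (\<Sum>m\<le>k. Poly_Mapping.single (GX (restr \<eta> m n)) 1)"

definition Rel :: "nat \<Rightarrow> 's tup set \<Rightarrow> ('s tup \<Rightarrow> nat \<Rightarrow> int) \<Rightarrow> ('s gen \<Rightarrow>\<^sub>0 int) set" where
  "Rel k Lam a = generate (FG k Lam) {rel_elem k a \<eta> n | \<eta> n. \<eta> \<in> Lam}"

definition Gx :: "nat \<Rightarrow> 's tup set \<Rightarrow> ('s tup \<Rightarrow> nat \<Rightarrow> int) \<Rightarrow> ('s gen \<Rightarrow>\<^sub>0 int) set monoid" where
  "Gx k Lam a = FG k Lam Mod Rel k Lam a"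

definition gimg :: "nat \<Rightarrow> 's tup set \<Rightarrow> ('s tup \<Rightarrow> nat \<Rightarrow> int) \<Rightarrow> 's gen \<Rightarrow> ('s gen \<Rightarrow>\<^sub>0 int) set" where
  "gimg k Lam a g = r_coset (FG k Lam) (Rel k Lam a) (Poly_Mapping.single g 1)"

definition G_U :: "nat \<Rightarrow> 's tup set \<Rightarrow> ('s tup \<Rightarrow> nat \<Rightarrow> int) \<Rightarrow> (nat \<Rightarrow> 's) set
                    \<Rightarrow> ('s gen \<Rightarrow>\<^sub>0 int) set set" where
  "G_U k Lam a U = generate (Gx k Lam a)
     ({gimg k Lam a GZ}
      \<union> {gimg k Lam a (GY \<eta> n) | \<eta> n. \<eta> \<in> Lam \<and> set \<eta> \<subseteq> U}
      \<union> {gimg k Lam a (GX (restr \<eta> m n)) | \<eta> m n. \<eta> \<in> Lam \<and> set \<eta> \<subseteq> U \<and> m \<le> k})"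

definition G_Uu :: "nat \<Rightarrow> 's tup set \<Rightarrow> ('s tup \<Rightarrow> nat \<Rightarrow> int) \<Rightarrow> (nat \<Rightarrow> 's) set
                    \<Rightarrow> (nat \<Rightarrow> 's) set \<Rightarrow> ('s gen \<Rightarrow>\<^sub>0 int) set set" where
  "G_Uu k Lam a U u = generate (Gx k Lam a) (\<Union>\<eta>\<in>u. G_U k Lam a (U \<union> (u - {\<eta>})))"

(* an abelian group is free iff it is isomorphic to the free abelian group on some set
   (a basis can always be chosen inside the carrier) *)
definition free_abgroup :: "('a, 'b) monoid_scheme \<Rightarrow> bool" where
  "free_abgroup G \<longleftrightarrow> (\<exists>B \<subseteq> carrier G. G \<cong> free_Abelian_group B)"

(* le_aleph n A  <->  |A| <= aleph_n, using aleph_0 = natLeq and aleph_{n+1} = cardSuc aleph_n *)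
fun le_aleph :: "nat \<Rightarrow> 'a set \<Rightarrow> bool" where
  "le_aleph 0 A \<longleftrightarrow> |A| \<le>o natLeq"
| "le_aleph (Suc n) A \<longleftrightarrow> (\<exists>B \<subseteq> A. le_aleph n B \<and> |A| \<le>o cardSuc |B| )"

end

theory Submission
  imports Defs "HOL-Library.Countable_Set_Type"
begin

text \<open>
  Order the tuples \<eta> \<in> \<Lambda> with entries in U \<union> u that contain all of u well-foundedly, so that
  every \<eta> has a coordinate m \<eta> which is not needed to cover u and only finitely many earlier
  tuples differ from \<eta> in that coordinate alone. Such an order exists when |U| \<le> \<aleph>_(k-|u|):
  for countable U enumerate the tuples; otherwise rank a tuple by its largest entry x \<in> U in a
  well-order of U of minimal type, and order the tuples of rank x by induction, applied to the
  entries below x and to u \<union> {x}. Then from some level N \<eta> on, the generators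
  \<open>GX (restr \<eta> (m \<eta>) n)\<close> belong to no earlier tuple. The relation of (\<eta>, n) eliminates
  \<open>GY \<eta> n\<close> for n < N \<eta> and \<open>GX (restr \<eta> (m \<eta>) n)\<close> for n \<ge> N \<eta>, recursively along the order.
  Rewriting every generator through the remaining ones defines a homomorphism from G_(U \<union> u)
  onto the free abelian group on the generators that are neither eliminated nor attached to a
  tuple missing an element of u, and its kernel is G_(U,u). Part (2) is the case u = {}.
\<close>

section \<open>Cardinals below aleph_n\<close>

lemma le_aleph_mono:
  assumes "le_aleph n A" "|C| \<le>o |A|"
  shows "le_aleph n C"
  using assms
proof (induction n arbitrary: A C)
  case 0
  then show ?case using ordLeq_transitive by auto
next
  case (Suc n)
  from Suc.prems(1) obtain B where B: "B \<subseteq> A" "le_aleph n B" "|A| \<le>o cardSuc |B|" by auto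
  show ?case
  proof (cases "|C| \<le>o |B|")
    case True
    then have "le_aleph n C" using Suc.IH B(2) by blast
    moreover have "|C| \<le>o cardSuc |C|"
      by (rule ordLess_imp_ordLeq[OF cardSuc_greater[OF card_of_Card_order]])
    ultimately show ?thesis by auto
  next
    case False
    then have "|B| <o |C|"
      using not_ordLeq_iff_ordLess[OF card_of_Well_order card_of_Well_order] by simp
    then have "\<exists>f. inj_on f B \<and> f ` B \<subseteq> C"
      by (rule card_of_ordLeq[THEN iffD2, OF ordLess_imp_ordLeq])
    then obtain f where f: "inj_on f B" "f ` B \<subseteq> C" by blast
    have "bij_betw f B (f ` B)" using f(1) by (rule bij_betw_imageI) simp
    then have iso: "|B| =o |f ` B|" using card_of_ordIso by blast
    have "le_aleph n (f ` B)" by (rule Suc.IH[OF B(2) ordIso_imp_ordLeq[OF ordIso_symmetric[OF iso]]])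
    moreover have "cardSuc |B| =o cardSuc |f ` B|"
      by (rule cardSuc_invar_ordIso[OF card_of_Card_order card_of_Card_order, THEN iffD2, OF iso])
    then have "|C| \<le>o cardSuc |f ` B|"
      by (rule ordLeq_ordIso_trans[OF ordLeq_transitive[OF Suc.prems(2) B(3)]])
    ultimately show ?thesis using f(2) by auto
  qed
qed

lemma le_aleph_0_iff_countable: "le_aleph 0 A \<longleftrightarrow> countable A"
  by (simp add: countable_card_le_natLeq)

lemma le_aleph_empty: "le_aleph n ({} :: 'a set)"
proof (induction n)
  case 0
  show ?case by (subst le_aleph_0_iff_countable) simp
next
  case (Suc n)
  moreover have "|{} :: 'a set| \<le>o cardSuc |{} :: 'a set|"
    by (rule ordLess_imp_ordLeq[OF cardSuc_greater[OF card_of_Card_order]])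
  ultimately show ?case by auto
qed

lemma le_aleph_Suc_underS:
  assumes "le_aleph (Suc n) A" "x \<in> A"
  shows "le_aleph n (underS (card_of A) x)"
proof -
  from assms(1) obtain B where B: "B \<subseteq> A" "le_aleph n B" "|A| \<le>o cardSuc |B|" by auto
  have "|underS (card_of A) x| <o |A|"
    by (rule card_of_underS[OF card_of_Card_order]) (simp add: assms(2))
  then have "|underS (card_of A) x| <o cardSuc |B|" using B(3) by (rule ordLess_ordLeq_trans)
  then have "|underS (card_of A) x| \<le>o |B|"
    by (simp add: cardSuc_ordLeq_ordLess[OF card_of_Card_order card_of_Card_order])
  then show ?thesis using le_aleph_mono B(2) by blast
qed

section \<open>Admissible orders of tuples\<close>

definition tuples :: "nat \<Rightarrow> 'a set \<Rightarrow> 'a set \<Rightarrow> 'a list set" where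
  "tuples k U u = {\<eta>. length \<eta> = Suc k \<and> set \<eta> \<subseteq> U \<union> u \<and> u \<subseteq> set \<eta>}"

definition covers_off :: "'a set \<Rightarrow> 'a list \<Rightarrow> nat \<Rightarrow> bool" where
  "covers_off u \<eta> m \<longleftrightarrow> (\<forall>\<nu>\<in>u. \<exists>i<length \<eta>. i \<noteq> m \<and> \<eta> ! i = \<nu>)"

definition agree_off :: "nat \<Rightarrow> 'a list \<Rightarrow> 'a list \<Rightarrow> bool" where
  "agree_off m \<rho> \<eta> \<longleftrightarrow> length \<rho> = length \<eta> \<and> (\<forall>i<length \<eta>. i \<noteq> m \<longrightarrow> \<rho> ! i = \<eta> ! i)"

definition admissible_order ::
    "nat \<Rightarrow> 'a set \<Rightarrow> 'a set \<Rightarrow> ('a list \<times> 'a list) set \<Rightarrow> ('a list \<Rightarrow> nat) \<Rightarrow> bool" where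
  "admissible_order k U u r m \<longleftrightarrow> wf r \<and> total_on (tuples k U u) r \<and>
     (\<forall>\<eta>\<in>tuples k U u. m \<eta> \<le> k \<and> covers_off u \<eta> (m \<eta>) \<and>
        finite {\<rho>\<in>tuples k U u. (\<rho>, \<eta>) \<in> r \<and> agree_off (m \<eta>) \<rho> \<eta>})"

lemma covers_off_mono: "covers_off u' \<eta> m \<Longrightarrow> u \<subseteq> u' \<Longrightarrow> covers_off u \<eta> m"
  by (auto simp: covers_off_def)

lemma covers_off_agree_off:
  assumes "covers_off u \<eta> m" "agree_off m \<rho> \<eta>"
  shows "u \<subseteq> set \<rho>"
proof
  fix \<nu> assume "\<nu> \<in> u"
  then obtain i where "i < length \<eta>" "i \<noteq> m" "\<eta> ! i = \<nu>"
    using assms(1) by (auto simp: covers_off_def)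
  then show "\<nu> \<in> set \<rho>" using assms(2) by (metis agree_off_def nth_mem)
qed

lemma agree_off_nth_neq:
  assumes "agree_off m \<rho> \<eta>" "\<rho> \<noteq> \<eta>"
  shows "\<rho> ! m \<noteq> \<eta> ! m"
proof
  assume "\<rho> ! m = \<eta> ! m"
  with assms(1) have "\<rho> = \<eta>"
    unfolding agree_off_def by (metis nth_equalityI)
  with assms(2) show False ..
qed

lemma exists_covers_off:
  assumes "length \<eta> = Suc k" "u \<subseteq> set \<eta>" "finite u" "card u \<le> k"
  shows "\<exists>m\<le>k. covers_off u \<eta> m"
proof -
  have "\<forall>\<nu>\<in>u. \<exists>i. i < length \<eta> \<and> \<eta> ! i = \<nu>"
    using assms(2) by (auto simp: in_set_conv_nth)
  then obtain pos where pos: "\<forall>\<nu>\<in>u. pos \<nu> < length \<eta> \<and> \<eta> ! pos \<nu> = \<nu>"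
    by (rule bchoice[THEN exE])
  have "card (pos ` u) < card {..k}"
    using card_image_le[OF assms(3), of pos] assms(4) by simp
  then obtain m where "m \<in> {..k}" "m \<notin> pos ` u"
    by (meson card_mono finite_imageI assms(3) not_le subsetI)
  then show ?thesis using pos unfolding covers_off_def by fastforce
qed

lemma admissible_order_countable:
  assumes "countable U" "finite u" "card u \<le> k"
  shows "\<exists>r m. admissible_order k U u r m"
proof -
  let ?T = "tuples k U u"
  have "countable (lists (U \<union> u))" using assms(1,2) by (simp add: countable_finite)
  moreover have "?T \<subseteq> lists (U \<union> u)" by (auto simp: tuples_def)
  ultimately have T: "countable ?T" by (rule countable_subset[rotated])
  define r where "r = inv_image less_than (to_nat_on ?T)"
  have "\<forall>\<eta>\<in>?T. \<exists>i\<le>k. covers_off u \<eta> i"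
    using exists_covers_off assms(2,3) by (auto simp: tuples_def)
  then obtain m where m: "\<forall>\<eta>\<in>?T. m \<eta> \<le> k \<and> covers_off u \<eta> (m \<eta>)"
    by (rule bchoice[THEN exE]) blast
  have "finite {\<rho>\<in>?T. (\<rho>, \<eta>) \<in> r}" for \<eta>
    using finite_vimage_IntI[of "{..<to_nat_on ?T \<eta>}" "to_nat_on ?T" ?T] inj_on_to_nat_on[OF T]
    by (simp add: r_def Int_def conj_commute)
  then have "finite {\<rho>\<in>?T. (\<rho>, \<eta>) \<in> r \<and> agree_off (m \<eta>) \<rho> \<eta>}" for \<eta>
    by (rule finite_subset[rotated]) auto
  moreover have "total_on ?T r"
    using inj_on_to_nat_on[OF T] unfolding total_on_def r_def in_inv_image less_than_iff
    by (metis inj_onD linorder_neqE_nat)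
  moreover have "wf r" by (simp add: r_def)
  ultimately have "admissible_order k U u r m" using m by (simp add: admissible_order_def)
  then show ?thesis by blast
qed

lemma Well_order_finite_has_max:
  assumes "Well_order r" "finite A" "A \<noteq> {}" "A \<subseteq> Field r"
  shows "\<exists>x\<in>A. \<forall>y\<in>A. (y, x) \<in> r"
  using assms(2-4)
proof (induction A rule: finite_ne_induct)
  case (singleton x)
  then show ?case using assms(1) by (auto simp: order_on_defs refl_on_def)
next
  case (insert a A)
  interpret wo_rel r using assms(1) by unfold_locales
  obtain x where x: "x \<in> A" "\<forall>y\<in>A. (y, x) \<in> r" using insert by auto
  then have "(a, max2 a x) \<in> r" "(x, max2 a x) \<in> r" "max2 a x \<in> {a, x}"
    using max2_greater_among insert.prems by auto
  then show ?case using x TRANS by (auto dest: transD)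
qed

definition rank_lex :: "'a set \<Rightarrow> ('a \<Rightarrow> 'c) \<Rightarrow> 'c rel \<Rightarrow> ('c \<Rightarrow> 'a rel) \<Rightarrow> 'a rel" where
  "rank_lex T rk Ro R = {(x, y). x \<in> T \<and> y \<in> T \<and> ((rk x, rk y) \<in> Ro \<or> rk x = rk y \<and> (x, y) \<in> R (rk y))}"

lemma wf_rank_lex:
  assumes "wf Ro" "\<And>c. c \<in> rk ` T \<Longrightarrow> wf (R c)"
  shows "wf (rank_lex T rk Ro R)"
proof -
  have "wf (inv_image Ro fst \<union> same_fst (\<lambda>c. c \<in> rk ` T) R)"
    by (rule wf_union_compatible[OF wf_inv_image[OF assms(1)] wf_same_fst])
      (use assms(2) in \<open>auto simp: same_fst_def\<close>)
  then show ?thesis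
    by (rule wf_subset[OF wf_inv_image[of _ "\<lambda>x. (rk x, x)"]]) (auto simp: rank_lex_def same_fst_def)
qed

lemma total_on_rank_lex:
  assumes "total_on (rk ` T) Ro" "\<And>c. c \<in> rk ` T \<Longrightarrow> total_on {x \<in> T. rk x = c} (R c)"
  shows "total_on T (rank_lex T rk Ro R)"
proof (rule total_onI)
  fix x y assume xy: "x \<in> T" "y \<in> T" "x \<noteq> y"
  show "(x, y) \<in> rank_lex T rk Ro R \<or> (y, x) \<in> rank_lex T rk Ro R"
  proof (cases "rk x = rk y")
    case True
    then show ?thesis using assms(2)[of "rk y"] xy by (auto simp: total_on_def rank_lex_def)
  next
    case False
    then show ?thesis using assms(1) xy by (auto simp: total_on_def rank_lex_def)
  qed
qed

definition option_order :: "'a rel \<Rightarrow> 'a option rel" where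
  "option_order r = {(c', c). \<exists>x. c = Some x \<and> (c' = None \<or> (\<exists>y. c' = Some y \<and> y \<noteq> x \<and> (y, x) \<in> r))}"

lemma wf_option_order: "wf (r - Id) \<Longrightarrow> wf (option_order r)"
proof -
  assume "wf (r - Id)"
  then have "wf (inv_image (less_than <*lex*> (r - Id)) (\<lambda>c. (if c = None then 0::nat else 1, the c)))"
    by (intro wf_inv_image wf_lex_prod wf_less_than)
  then show ?thesis by (rule wf_subset) (auto simp: option_order_def)
qed

lemma total_on_option_order: "total_on A r \<Longrightarrow> total_on (insert None (Some ` A)) (option_order r)"
proof (rule total_onI)
  fix c c' assume "total_on A r" "c \<in> insert None (Some ` A)" "c' \<in> insert None (Some ` A)" "c \<noteq> c'"
  then show "(c, c') \<in> option_order r \<or> (c', c) \<in> option_order r"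
    unfolding option_order_def total_on_def by (cases c; cases c') auto
qed

lemma admissible_order_glue:
  fixes rk :: "'a list \<Rightarrow> 'c"
  assumes "wf Ro" "total_on (rk ` tuples k U u) Ro"
    and sub: "\<And>c. c \<in> rk ` tuples k U u \<Longrightarrow> admissible_order k (UU c) (uu c) (R c) (M c)"
    and fibre: "\<And>\<eta>. \<eta> \<in> tuples k U u \<Longrightarrow> \<eta> \<in> tuples k (UU (rk \<eta>)) (uu (rk \<eta>))"
    and "\<And>c. u \<subseteq> uu c"
    and stable: "\<And>\<eta> \<rho>. uu (rk \<eta>) \<subseteq> set \<rho> \<Longrightarrow> (rk \<rho>, rk \<eta>) \<notin> Ro"
  shows "admissible_order k U u (rank_lex (tuples k U u) rk Ro R) (\<lambda>\<eta>. M (rk \<eta>) \<eta>)"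
proof -
  let ?T = "tuples k U u" and ?r = "rank_lex (tuples k U u) rk Ro R"
  have "wf ?r" using sub by (intro wf_rank_lex assms(1)) (simp add: admissible_order_def)
  moreover have "total_on ?T ?r"
  proof (rule total_on_rank_lex[OF assms(2)])
    fix c assume "c \<in> rk ` ?T"
    then have "total_on (tuples k (UU c) (uu c)) (R c)" using sub by (simp add: admissible_order_def)
    then show "total_on {x \<in> ?T. rk x = c} (R c)" by (rule total_on_subset) (use fibre in auto)
  qed
  moreover have "M (rk \<eta>) \<eta> \<le> k \<and> covers_off u \<eta> (M (rk \<eta>) \<eta>)
      \<and> finite {\<rho>\<in>?T. (\<rho>, \<eta>) \<in> ?r \<and> agree_off (M (rk \<eta>) \<eta>) \<rho> \<eta>}" if "\<eta> \<in> ?T" for \<eta>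
  proof -
    let ?c = "rk \<eta>"
    have c: "M ?c \<eta> \<le> k \<and> covers_off (uu ?c) \<eta> (M ?c \<eta>) \<and>
      finite {\<rho>\<in>tuples k (UU ?c) (uu ?c). (\<rho>, \<eta>) \<in> R ?c \<and> agree_off (M ?c \<eta>) \<rho> \<eta>}"
      using sub[of ?c] fibre[OF that] that unfolding admissible_order_def by blast
    have "{\<rho>\<in>?T. (\<rho>, \<eta>) \<in> ?r \<and> agree_off (M ?c \<eta>) \<rho> \<eta>}
      \<subseteq> {\<rho>\<in>tuples k (UU ?c) (uu ?c). (\<rho>, \<eta>) \<in> R ?c \<and> agree_off (M ?c \<eta>) \<rho> \<eta>}"
    proof
      fix \<rho> assume "\<rho> \<in> {\<rho>\<in>?T. (\<rho>, \<eta>) \<in> ?r \<and> agree_off (M ?c \<eta>) \<rho> \<eta>}"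
      then have \<rho>: "\<rho> \<in> ?T" "(\<rho>, \<eta>) \<in> ?r" "agree_off (M ?c \<eta>) \<rho> \<eta>" by auto
      have "uu ?c \<subseteq> set \<rho>" using c \<rho>(3) covers_off_agree_off by blast
      then have "rk \<rho> = ?c" "(\<rho>, \<eta>) \<in> R ?c" using stable \<rho>(2) by (auto simp: rank_lex_def)
      then show "\<rho> \<in> {\<rho>\<in>tuples k (UU ?c) (uu ?c). (\<rho>, \<eta>) \<in> R ?c \<and> agree_off (M ?c \<eta>) \<rho> \<eta>}"
        using fibre[OF \<rho>(1)] \<rho>(3) by auto
    qed
    then show ?thesis using c covers_off_mono assms(5) finite_subset by blast
  qed
  ultimately show ?thesis unfolding admissible_order_def by blast
qed

lemma admissible_order_split_by_top:
  fixes U u :: "'a set"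
  assumes wo: "Well_order r0" and F: "Field r0 = U" and "U \<inter> u = {}"
    and none: "admissible_order k {} u R0 M0"
    and some: "\<And>x. x \<in> U \<Longrightarrow> admissible_order k (underS r0 x) (insert x u) (R x) (M x)"
  shows "\<exists>r m. admissible_order k U u r m"
proof -
  let ?T = "tuples k U u"
  define top where "top \<eta> = (SOME x. x \<in> set \<eta> \<inter> U \<and> (\<forall>y\<in>set \<eta> \<inter> U. (y, x) \<in> r0))" for \<eta>
  have top: "top \<eta> \<in> set \<eta> \<inter> U \<and> (\<forall>y\<in>set \<eta> \<inter> U. (y, top \<eta>) \<in> r0)" if "set \<eta> \<inter> U \<noteq> {}" for \<eta>
    unfolding top_def by (rule someI_ex) (use Well_order_finite_has_max[OF wo _ that] F in auto)
  define rk where "rk \<eta> = (if set \<eta> \<inter> U = {} then None else Some (top \<eta>))" for \<eta>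
  have rk_Some: "x \<in> set \<eta> \<inter> U" if "rk \<eta> = Some x" for \<eta> x
    using that top by (auto simp: rk_def split: if_splits)
  have rk_range: "rk ` ?T \<subseteq> insert None (Some ` U)"
  proof (rule image_subsetI)
    fix \<eta> show "rk \<eta> \<in> insert None (Some ` U)"
      using top[of \<eta>] by (cases "set \<eta> \<inter> U = {}") (auto simp: rk_def)
  qed
  have "total_on U r0" using wo F by (simp add: order_on_defs)
  then have total: "total_on (rk ` ?T) (option_order r0)"
    using rk_range total_on_option_order total_on_subset by blast
  have wf: "wf (option_order r0)" using wo by (intro wf_option_order) (simp add: well_order_on_def)
  define UU where "UU c = (case c of None \<Rightarrow> {} | Some x \<Rightarrow> underS r0 x)" for c
  define uu where "uu c = (case c of None \<Rightarrow> u | Some x \<Rightarrow> insert x u)" for c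
  define R' where "R' c = (case c of None \<Rightarrow> R0 | Some x \<Rightarrow> R x)" for c
  define M' where "M' c = (case c of None \<Rightarrow> M0 | Some x \<Rightarrow> M x)" for c
  have sub: "admissible_order k (UU c) (uu c) (R' c) (M' c)" if "c \<in> rk ` ?T" for c
    using that rk_range none some by (cases c) (auto simp: UU_def uu_def R'_def M'_def)
  have fibre: "\<eta> \<in> tuples k (UU (rk \<eta>)) (uu (rk \<eta>))" if "\<eta> \<in> ?T" for \<eta>
    using that top[of \<eta>] by (auto simp: tuples_def rk_def underS_def UU_def uu_def)
  have uu: "u \<subseteq> uu c" for c by (cases c) (auto simp: uu_def)
  have stable: "(rk \<rho>, rk \<eta>) \<notin> option_order r0" if "uu (rk \<eta>) \<subseteq> set \<rho>" for \<eta> \<rho>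
  proof
    assume "(rk \<rho>, rk \<eta>) \<in> option_order r0"
    then obtain x where x: "rk \<eta> = Some x"
      and below: "rk \<rho> = None \<or> (\<exists>y. rk \<rho> = Some y \<and> y \<noteq> x \<and> (y, x) \<in> r0)"
      unfolding option_order_def by blast
    have "x \<in> set \<rho> \<inter> U" using that rk_Some[OF x] x by (simp add: uu_def)
    then have "rk \<rho> = Some (top \<rho>)" "(x, top \<rho>) \<in> r0" using top[of \<rho>] by (auto simp: rk_def)
    moreover have "antisym r0" using wo by (simp add: order_on_defs)
    ultimately show False using below unfolding antisym_def by (metis option.distinct(1) option.inject)
  qed
  from admissible_order_glue[OF wf total sub fibre uu stable] show ?thesis by blast
qed

lemma admissible_order_exists:
  assumes "le_aleph n U" "finite u" "U \<inter> u = {}" "card u + n \<le> k"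
  shows "\<exists>r m. admissible_order k U u r m"
  using assms
proof (induction n arbitrary: U u)
  case 0
  then have "countable U" using le_aleph_0_iff_countable by blast
  with 0 show ?case using admissible_order_countable by simp
next
  case (Suc n)
  have "\<exists>R M. admissible_order k {} u R M" using Suc.IH[OF le_aleph_empty] Suc.prems by simp
  moreover have "\<forall>x\<in>U. \<exists>R M. admissible_order k (underS (card_of U) x) (insert x u) R M"
  proof
    fix x assume x: "x \<in> U"
    have "underS (card_of U) x \<subseteq> U" using Order_Relation.underS_Field[of "card_of U" x] by simp
    then have "underS (card_of U) x \<inter> insert x u = {}" using Suc.prems(3) by (auto simp: underS_def)
    moreover have "card (insert x u) + n \<le> k" using Suc.prems(2,4) by (simp add: card_insert_if)
    ultimately show "\<exists>R M. admissible_order k (underS (card_of U) x) (insert x u) R M"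
      using Suc.IH[OF le_aleph_Suc_underS[OF Suc.prems(1) x], of "insert x u"] Suc.prems(2) by simp
  qed
  ultimately obtain R0 M0 R M where "admissible_order k {} u R0 M0"
    "\<And>x. x \<in> U \<Longrightarrow> admissible_order k (underS (card_of U) x) (insert x u) (R x) (M x)"
    by metis
  then show ?case by (rule admissible_order_split_by_top[OF card_of_Well_order Field_card_of Suc.prems(3)])
qed

lemma finite_distinguishing_bound:
  fixes g :: "nat \<Rightarrow> 'a"
  assumes "finite D" "g \<notin> D"
  shows "\<exists>N. \<forall>h\<in>D. \<exists>i<N. h i \<noteq> g i"
proof -
  have "\<forall>h\<in>D. \<exists>i. h i \<noteq> g i"
  proof
    fix h assume "h \<in> D"
    with assms(2) have "h \<noteq> g" by blast
    then show "\<exists>i. h i \<noteq> g i" by (simp add: fun_eq_iff)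
  qed
  then obtain j where j: "\<forall>h\<in>D. h (j h) \<noteq> g (j h)" by (rule bchoice[THEN exE])
  obtain N where "j ` D \<subseteq> {..<N}" using finite_nat_bounded finite_imageI[OF assms(1)] by blast
  then show ?thesis using j by blast
qed

lemma admissible_order_separating_levels:
  fixes U u :: "(nat \<Rightarrow> 'a) set"
  assumes "admissible_order k U u r m"
  shows "\<exists>N. \<forall>\<eta>\<in>tuples k U u. \<forall>\<rho>\<in>tuples k U u. (\<rho>, \<eta>) \<in> r \<longrightarrow> agree_off (m \<eta>) \<rho> \<eta>
           \<longrightarrow> (\<exists>i<N \<eta>. (\<rho> ! m \<eta>) i \<noteq> (\<eta> ! m \<eta>) i)"
proof -
  define earlier where "earlier \<eta> = {\<rho>\<in>tuples k U u. (\<rho>, \<eta>) \<in> r \<and> agree_off (m \<eta>) \<rho> \<eta>}" for \<eta>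
  have "\<exists>n. \<forall>h\<in>(\<lambda>\<rho>. \<rho> ! m \<eta>) ` earlier \<eta>. \<exists>i<n. h i \<noteq> (\<eta> ! m \<eta>) i" if "\<eta> \<in> tuples k U u" for \<eta>
  proof (rule finite_distinguishing_bound)
    show "finite ((\<lambda>\<rho>. \<rho> ! m \<eta>) ` earlier \<eta>)"
      using assms that by (simp add: admissible_order_def earlier_def)
    show "\<eta> ! m \<eta> \<notin> (\<lambda>\<rho>. \<rho> ! m \<eta>) ` earlier \<eta>"
    proof
      assume "\<eta> ! m \<eta> \<in> (\<lambda>\<rho>. \<rho> ! m \<eta>) ` earlier \<eta>"
      then obtain \<rho> where \<rho>: "(\<rho>, \<eta>) \<in> r" "agree_off (m \<eta>) \<rho> \<eta>" "\<eta> ! m \<eta> = \<rho> ! m \<eta>"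
        by (auto simp: earlier_def)
      have "wf r" using assms by (simp add: admissible_order_def)
      then have "\<rho> \<noteq> \<eta>" using \<rho>(1) wf_not_refl by metis
      with \<rho>(2,3) show False using agree_off_nth_neq by metis
    qed
  qed
  then obtain N where "\<forall>\<eta>\<in>tuples k U u. \<forall>h\<in>(\<lambda>\<rho>. \<rho> ! m \<eta>) ` earlier \<eta>. \<exists>i<N \<eta>. h i \<noteq> (\<eta> ! m \<eta>) i"
    by metis
  then show ?thesis unfolding earlier_def by blast
qed

section \<open>Free abelian groups modulo relations\<close>

lemma frag_extend_diff_fun: "frag_extend (\<lambda>x. b x - c x) f = frag_extend b f - frag_extend c f"
  by (induction f rule: frag_induction[OF subset_UNIV]) (simp_all add: frag_extend_diff)

lemma frag_extend_frag_extend: "frag_extend g (frag_extend b f) = frag_extend (\<lambda>x. frag_extend g (b x)) f"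
  by (induction f rule: frag_induction[OF subset_UNIV]) (simp_all add: frag_extend_diff)

lemma subgroup_carrier_free_Abelian_group:
  assumes "X \<subseteq> S"
  shows "subgroup (carrier (free_Abelian_group X)) (free_Abelian_group S)"
proof (rule group.subgroupI)
  have "0 \<in> carrier (free_Abelian_group X)" by simp
  then show "carrier (free_Abelian_group X) \<noteq> {}" by blast
  fix x y assume "x \<in> carrier (free_Abelian_group X)" "y \<in> carrier (free_Abelian_group X)"
  then show "inv\<^bsub>free_Abelian_group S\<^esub> x \<in> carrier (free_Abelian_group X)"
    and "x \<otimes>\<^bsub>free_Abelian_group S\<^esub> y \<in> carrier (free_Abelian_group X)"
    using assms keys_add[of x y] by auto
qed (use assms in auto)

lemma subgroup_free_Abelian_group_diff:
  assumes "subgroup H (free_Abelian_group S)" "x \<in> H" "y \<in> H"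
  shows "x - y \<in> H"
proof -
  interpret subgroup H "free_Abelian_group S" by (rule assms(1))
  have "y \<in> carrier (free_Abelian_group S)" using subset assms(3) by blast
  then have "Poly_Mapping.keys y \<subseteq> S" by simp
  then have "- y \<in> H" using m_inv_closed[OF assms(3)] by simp
  then have "x \<otimes>\<^bsub>free_Abelian_group S\<^esub> - y \<in> H" by (rule m_closed[OF assms(2)])
  then show ?thesis by simp
qed

lemma subgroup_free_Abelian_group_frag_extend:
  assumes H: "subgroup H (free_Abelian_group S)" and D: "\<And>x. x \<in> Poly_Mapping.keys f \<Longrightarrow> D x \<in> H"
  shows "frag_extend D f \<in> H"
proof -
  have zero: "0 \<in> H" using subgroup.one_closed[OF H] by simp
  have diff: "x - y \<in> H" if "x \<in> H" "y \<in> H" for x y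
    using subgroup_free_Abelian_group_diff[OF H that] .
  have "x + y \<in> H" if "x \<in> H" "y \<in> H" for x y
    using diff[OF that(1) diff[OF zero that(2)]] by simp
  moreover have "frag_cmul (Poly_Mapping.lookup f x) (D x) \<in> H" if "x \<in> Poly_Mapping.keys f" for x
    by (rule frag_closure_minus_cmul[where P = "\<lambda>x. x \<in> H"]) (use zero diff D[OF that] in auto)
  ultimately show ?thesis
    unfolding frag_extend_def using zero by (induction rule: finite_induct[OF finite_keys]) auto
qed

lemma generate_frag_of:
  assumes "X \<subseteq> S"
  shows "generate (free_Abelian_group S) (frag_of ` X) = carrier (free_Abelian_group X)"
proof
  interpret F: group "free_Abelian_group S" by simp
  have sub: "subgroup (generate (free_Abelian_group S) (frag_of ` X)) (free_Abelian_group S)"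
    using assms by (intro F.generate_is_subgroup) auto
  show "generate (free_Abelian_group S) (frag_of ` X) \<subseteq> carrier (free_Abelian_group X)"
    by (rule F.generate_subgroup_incl[OF _ subgroup_carrier_free_Abelian_group[OF assms]]) auto
  have "0 \<in> generate (free_Abelian_group S) (frag_of ` X)"
    using subgroup.one_closed[OF sub] by simp
  then have "f \<in> generate (free_Abelian_group S) (frag_of ` X)" if "Poly_Mapping.keys f \<subseteq> X" for f
    by (rule free_Abelian_group_induct[OF that])
      (auto intro: generate.incl subgroup_free_Abelian_group_diff[OF sub])
  then show "carrier (free_Abelian_group X) \<subseteq> generate (free_Abelian_group S) (frag_of ` X)" by auto
qed

lemma generate_UN_carrier_free_Abelian_group:
  assumes "\<And>i. i \<in> I \<Longrightarrow> A i \<subseteq> S"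
  shows "generate (free_Abelian_group S) (\<Union>i\<in>I. carrier (free_Abelian_group (A i)))
    = carrier (free_Abelian_group (\<Union>i\<in>I. A i))"
proof
  interpret F: group "free_Abelian_group S" by simp
  have A: "(\<Union>i\<in>I. A i) \<subseteq> S" using assms by blast
  show "generate (free_Abelian_group S) (\<Union>i\<in>I. carrier (free_Abelian_group (A i)))
    \<subseteq> carrier (free_Abelian_group (\<Union>i\<in>I. A i))"
    by (rule F.generate_subgroup_incl[OF _ subgroup_carrier_free_Abelian_group[OF A]]) fastforce
  have "frag_of ` (\<Union>i\<in>I. A i) \<subseteq> (\<Union>i\<in>I. carrier (free_Abelian_group (A i)))" by auto
  then show "carrier (free_Abelian_group (\<Union>i\<in>I. A i))
    \<subseteq> generate (free_Abelian_group S) (\<Union>i\<in>I. carrier (free_Abelian_group (A i)))"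
    unfolding generate_frag_of[OF A, symmetric] by (rule F.mono_generate)
qed

lemma (in group_hom) subgroup_vimage:
  assumes "subgroup N H"
  shows "subgroup {x \<in> carrier G. h x \<in> N} G"
proof (rule G.subgroupI)
  have "\<one> \<in> {x \<in> carrier G. h x \<in> N}" using subgroup.one_closed[OF assms] by simp
  then show "{x \<in> carrier G. h x \<in> N} \<noteq> {}" by blast
  fix x y assume "x \<in> {x \<in> carrier G. h x \<in> N}" "y \<in> {x \<in> carrier G. h x \<in> N}"
  then show "inv x \<in> {x \<in> carrier G. h x \<in> N}" "x \<otimes> y \<in> {x \<in> carrier G. h x \<in> N}"
    using subgroup.m_inv_closed[OF assms] subgroup.m_closed[OF assms] by simp_all
qed auto

lemma group_hom_factor_surj:
  assumes f: "group_hom G H f" "f ` carrier G = carrier H" and g: "group_hom G K g"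
    and ker: "\<And>x. x \<in> carrier G \<Longrightarrow> f x = \<one>\<^bsub>H\<^esub> \<Longrightarrow> g x = \<one>\<^bsub>K\<^esub>"
  obtains h where "group_hom H K h" "\<And>x. x \<in> carrier G \<Longrightarrow> h (f x) = g x"
proof -
  interpret f: group_hom G H f by (rule f(1))
  interpret g: group_hom G K g by (rule g)
  have eq: "g x = g y" if "x \<in> carrier G" "y \<in> carrier G" "f x = f y" for x y
  proof -
    have "f (x \<otimes>\<^bsub>G\<^esub> inv\<^bsub>G\<^esub> y) = \<one>\<^bsub>H\<^esub>" using that by simp
    then have "g x \<otimes>\<^bsub>K\<^esub> inv\<^bsub>K\<^esub> g y = \<one>\<^bsub>K\<^esub>" using ker[of "x \<otimes>\<^bsub>G\<^esub> inv\<^bsub>G\<^esub> y"] that by simp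
    then show ?thesis using g.H.inv_solve_right'[of "\<one>\<^bsub>K\<^esub>" "g x" "g y"] that by simp
  qed
  define h where "h z = g (SOME x. x \<in> carrier G \<and> f x = z)" for z
  have hf: "h (f x) = g x" if "x \<in> carrier G" for x
  proof -
    have "(SOME x'. x' \<in> carrier G \<and> f x' = f x) \<in> carrier G \<and> f (SOME x'. x' \<in> carrier G \<and> f x' = f x) = f x"
      by (rule someI[of _ x]) (simp add: that)
    then show ?thesis unfolding h_def using eq that by blast
  qed
  have "group_hom H K h"
  proof (unfold_locales, rule homI)
    fix z assume "z \<in> carrier H"
    then obtain x where "x \<in> carrier G" "z = f x" using f(2) by auto
    then show "h z \<in> carrier K" using hf by simp
  next
    fix z w assume "z \<in> carrier H" "w \<in> carrier H"
    then obtain x y where "x \<in> carrier G" "z = f x" "y \<in> carrier G" "w = f y" using f(2) by blast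
    then show "h (z \<otimes>\<^bsub>H\<^esub> w) = h z \<otimes>\<^bsub>K\<^esub> h w" by (simp flip: f.hom_mult add: hf)
  qed
  with hf show ?thesis using that by blast
qed

lemma group_hom_frag_extend:
  assumes "\<And>g. g \<in> W \<Longrightarrow> Poly_Mapping.keys (\<phi> g) \<subseteq> B"
  shows "group_hom (free_Abelian_group W) (free_Abelian_group B) (frag_extend \<phi>)"
proof -
  have "frag_extend \<phi> \<in> hom (free_Abelian_group W) (free_Abelian_group B)"
  proof (rule homI)
    fix x assume "x \<in> carrier (free_Abelian_group W)"
    then show "frag_extend \<phi> x \<in> carrier (free_Abelian_group B)"
      using assms keys_frag_extend[of \<phi> x] by fastforce
  qed (simp add: frag_extend_add)
  then show ?thesis by (simp add: group_hom_def group_hom_axioms_def)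
qed

locale free_presentation =
  fixes X :: "'g set" and R :: "('g \<Rightarrow>\<^sub>0 int) set"
  assumes subgroup_R: "subgroup R (free_Abelian_group X)"
begin

definition proj :: "('g \<Rightarrow>\<^sub>0 int) \<Rightarrow> ('g \<Rightarrow>\<^sub>0 int) set" where
  "proj f = R #>\<^bsub>free_Abelian_group X\<^esub> f"

definition vanishing :: "'g set \<Rightarrow> ('g \<Rightarrow>\<^sub>0 int) set" where
  "vanishing K = {f \<in> carrier (free_Abelian_group X). proj f \<in> proj ` carrier (free_Abelian_group K)}"

lemma keys_R_subset: "f \<in> R \<Longrightarrow> Poly_Mapping.keys f \<subseteq> X"
  using subgroup.subset[OF subgroup_R] by (metis carrier_free_Abelian_group_iff subsetD)

lemma group_hom_proj: "group_hom (free_Abelian_group X) (free_Abelian_group X Mod R) proj"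
proof -
  have "R \<lhd> free_Abelian_group X"
    by (rule comm_group.subgroup_imp_normal[OF abelian_free_Abelian_group subgroup_R])
  then have "proj \<in> hom (free_Abelian_group X) (free_Abelian_group X Mod R)"
    using normal.r_coset_hom_Mod unfolding proj_def by blast
  then show ?thesis
    using \<open>R \<lhd> free_Abelian_group X\<close> normal.factorgroup_is_group
    by (simp add: group_hom_def group_hom_axioms_def)
qed

sublocale proj: group_hom "free_Abelian_group X" "free_Abelian_group X Mod R" proj
  by (rule group_hom_proj)

lemma proj_eq_one_iff:
  assumes "Poly_Mapping.keys f \<subseteq> X"
  shows "proj f = \<one>\<^bsub>free_Abelian_group X Mod R\<^esub> \<longleftrightarrow> f \<in> R"
proof
  assume "proj f = \<one>\<^bsub>free_Abelian_group X Mod R\<^esub>"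
  moreover have "f \<in> proj f"
    unfolding proj_def using assms by (intro group.rcos_self subgroup_R) simp_all
  ultimately show "f \<in> R" by (simp add: FactGroup_def)
qed (simp add: proj_def FactGroup_def subgroup.rcos_const[OF subgroup_R])

lemma proj_add:
  "Poly_Mapping.keys f \<subseteq> X \<Longrightarrow> Poly_Mapping.keys g \<subseteq> X
    \<Longrightarrow> proj f \<otimes>\<^bsub>free_Abelian_group X Mod R\<^esub> proj g = proj (f + g)"
  using proj.hom_mult[of f g] by simp

lemma subgroup_vanishing:
  assumes "K \<subseteq> X"
  shows "subgroup (vanishing K) (free_Abelian_group X)"
  unfolding vanishing_def
  by (intro proj.subgroup_vimage proj.subgroup_img_is_subgroup subgroup_carrier_free_Abelian_group assms)

lemma R_subset_vanishing: "R \<subseteq> vanishing K"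
proof
  fix f assume "f \<in> R"
  then have "Poly_Mapping.keys f \<subseteq> X" by (rule keys_R_subset)
  moreover have "proj f = proj 0"
    using \<open>f \<in> R\<close> proj_eq_one_iff[OF calculation] proj_eq_one_iff[of 0] subgroup.one_closed[OF subgroup_R]
    by simp
  ultimately show "f \<in> vanishing K" by (force simp: vanishing_def)
qed

lemma frag_of_vanishing: "g \<in> K \<Longrightarrow> K \<subseteq> X \<Longrightarrow> frag_of g \<in> vanishing K"
  by (auto simp: vanishing_def)

lemma group_hom_proj_free_Abelian_group:
  assumes "W \<subseteq> X"
  shows "group_hom (free_Abelian_group W)
    (subgroup_generated (free_Abelian_group X Mod R) (proj ` carrier (free_Abelian_group W))) proj"
proof -
  have "subgroup (proj ` carrier (free_Abelian_group W)) (free_Abelian_group X Mod R)"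
    by (intro proj.subgroup_img_is_subgroup subgroup_carrier_free_Abelian_group assms)
  then have carrier: "carrier (subgroup_generated (free_Abelian_group X Mod R) (proj ` carrier (free_Abelian_group W)))
      = proj ` carrier (free_Abelian_group W)"
    by (rule subgroup.carrier_subgroup_generated_subgroup)
  have "proj \<in> hom (free_Abelian_group W)
    (subgroup_generated (free_Abelian_group X Mod R) (proj ` carrier (free_Abelian_group W)))"
  proof (rule homI)
    fix x y assume "x \<in> carrier (free_Abelian_group W)" "y \<in> carrier (free_Abelian_group W)"
    then show "proj (x \<otimes>\<^bsub>free_Abelian_group W\<^esub> y)
      = proj x \<otimes>\<^bsub>subgroup_generated (free_Abelian_group X Mod R) (proj ` carrier (free_Abelian_group W))\<^esub> proj y"
      using proj_add[of x y] assms by auto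
  qed (use carrier in auto)
  then show ?thesis
    using proj.H.group_subgroup_generated by (simp add: group_hom_def group_hom_axioms_def)
qed

lemma proj_factor_frag_extend:
  assumes "W \<subseteq> X" "\<And>g. g \<in> W \<Longrightarrow> Poly_Mapping.keys (\<phi> g) \<subseteq> B"
    and "\<And>f. f \<in> R \<Longrightarrow> Poly_Mapping.keys f \<subseteq> W \<Longrightarrow> frag_extend \<phi> f = 0"
  obtains \<Psi> where
    "group_hom (subgroup_generated (free_Abelian_group X Mod R) (proj ` carrier (free_Abelian_group W)))
      (free_Abelian_group B) \<Psi>"
    "\<And>x. x \<in> carrier (free_Abelian_group W) \<Longrightarrow> \<Psi> (proj x) = frag_extend \<phi> x"
proof -
  let ?H = "subgroup_generated (free_Abelian_group X Mod R) (proj ` carrier (free_Abelian_group W))"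
  have carrier: "proj ` carrier (free_Abelian_group W) = carrier ?H"
    by (intro subgroup.carrier_subgroup_generated_subgroup[symmetric] proj.subgroup_img_is_subgroup
        subgroup_carrier_free_Abelian_group assms(1))
  have ker: "frag_extend \<phi> x = \<one>\<^bsub>free_Abelian_group B\<^esub>"
    if "x \<in> carrier (free_Abelian_group W)" "proj x = \<one>\<^bsub>?H\<^esub>" for x
    using that assms(1,3) proj_eq_one_iff[of x] by auto
  obtain \<Psi> where "group_hom ?H (free_Abelian_group B) \<Psi>"
    "\<And>x. x \<in> carrier (free_Abelian_group W) \<Longrightarrow> \<Psi> (proj x) = frag_extend \<phi> x"
    using group_hom_factor_surj[OF group_hom_proj_free_Abelian_group[OF assms(1)] carrier
        group_hom_frag_extend[OF assms(2)] ker] by blast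
  then show thesis by (rule that)
qed

lemma vanishing_if_frag_extend_eq_0:
  assumes "K \<subseteq> X" "\<And>g. g \<in> W \<Longrightarrow> frag_of g - \<phi> g \<in> vanishing K"
    and "Poly_Mapping.keys x \<subseteq> W" "frag_extend \<phi> x = 0"
  shows "x \<in> vanishing K"
proof -
  have "frag_extend (\<lambda>g. frag_of g - \<phi> g) x \<in> vanishing K"
    using assms(2,3) subgroup_vanishing[OF assms(1)] by (intro subgroup_free_Abelian_group_frag_extend[of _ X]) auto
  then show ?thesis using assms(4) by (simp add: frag_extend_diff_fun flip: frag_expansion)
qed

theorem quotient_free_by_elimination:
  fixes W K B :: "'g set" and \<phi> :: "'g \<Rightarrow> 'g \<Rightarrow>\<^sub>0 int"
  assumes "W \<subseteq> X" "K \<subseteq> W" "B \<subseteq> W"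
    and basis: "\<And>b. b \<in> B \<Longrightarrow> \<phi> b = frag_of b"
    and keys: "\<And>g. g \<in> W \<Longrightarrow> Poly_Mapping.keys (\<phi> g) \<subseteq> B"
    and killed: "\<And>g. g \<in> K \<Longrightarrow> \<phi> g = 0"
    and relations: "\<And>f. f \<in> R \<Longrightarrow> Poly_Mapping.keys f \<subseteq> W \<Longrightarrow> frag_extend \<phi> f = 0"
    and congruent: "\<And>g. g \<in> W \<Longrightarrow> frag_of g - \<phi> g \<in> vanishing K"
  obtains \<Psi> where
    "group_hom (subgroup_generated (free_Abelian_group X Mod R) (proj ` carrier (free_Abelian_group W)))
      (free_Abelian_group B) \<Psi>"
    "\<Psi> ` carrier (subgroup_generated (free_Abelian_group X Mod R) (proj ` carrier (free_Abelian_group W)))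
      = carrier (free_Abelian_group B)"
    "kernel (subgroup_generated (free_Abelian_group X Mod R) (proj ` carrier (free_Abelian_group W)))
      (free_Abelian_group B) \<Psi> = proj ` carrier (free_Abelian_group K)"
proof -
  let ?H = "subgroup_generated (free_Abelian_group X Mod R) (proj ` carrier (free_Abelian_group W))"
  have carrier: "carrier ?H = proj ` carrier (free_Abelian_group W)"
    by (intro subgroup.carrier_subgroup_generated_subgroup proj.subgroup_img_is_subgroup
        subgroup_carrier_free_Abelian_group assms(1))
  obtain \<Psi> where \<Psi>: "group_hom ?H (free_Abelian_group B) \<Psi>"
    and \<Psi>_proj: "\<And>x. x \<in> carrier (free_Abelian_group W) \<Longrightarrow> \<Psi> (proj x) = frag_extend \<phi> x"
    using proj_factor_frag_extend[OF assms(1) keys relations] by blast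
  have "carrier (free_Abelian_group B) \<subseteq> \<Psi> ` carrier ?H"
  proof
    fix b assume b: "b \<in> carrier (free_Abelian_group B)"
    then have bW: "b \<in> carrier (free_Abelian_group W)" using assms(3) by auto
    have "frag_extend \<phi> b = frag_extend frag_of b" using basis b by (intro frag_extend_eq) auto
    then have "b = frag_extend \<phi> b" by (simp flip: frag_expansion)
    then have "b = \<Psi> (proj b)" using \<Psi>_proj[OF bW] by simp
    then show "b \<in> \<Psi> ` carrier ?H" using carrier bW by blast
  qed
  then have "\<Psi> ` carrier ?H = carrier (free_Abelian_group B)" using group_hom.hom_closed[OF \<Psi>] by blast
  moreover have "kernel ?H (free_Abelian_group B) \<Psi> = proj ` carrier (free_Abelian_group K)"
  proof
    show "kernel ?H (free_Abelian_group B) \<Psi> \<subseteq> proj ` carrier (free_Abelian_group K)"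
    proof
      fix y assume "y \<in> kernel ?H (free_Abelian_group B) \<Psi>"
      then obtain x where x: "x \<in> carrier (free_Abelian_group W)" "y = proj x" "frag_extend \<phi> x = 0"
        using carrier \<Psi>_proj by (auto simp: kernel_def)
      then have "x \<in> vanishing K"
        using assms(1,2) by (intro vanishing_if_frag_extend_eq_0[OF _ congruent]) auto
      then show "y \<in> proj ` carrier (free_Abelian_group K)" using x(2) by (simp add: vanishing_def)
    qed
    have "frag_extend \<phi> x = 0" if "Poly_Mapping.keys x \<subseteq> K" for x
      using that killed by (intro frag_extend_eq_0) auto
    then show "proj ` carrier (free_Abelian_group K) \<subseteq> kernel ?H (free_Abelian_group B) \<Psi>"
      using carrier \<Psi>_proj assms(2) by (auto simp: kernel_def)
  qed
  ultimately show thesis using that \<Psi> by blast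
qed

end

lemma wf_triangular_solution:
  fixes solved :: "'g \<Rightarrow> 'g \<Rightarrow>\<^sub>0 int" and base :: "'g \<Rightarrow> 'b \<Rightarrow>\<^sub>0 int"
  assumes "wf R" and below: "\<And>e g. e \<in> E \<Longrightarrow> g \<in> Poly_Mapping.keys (solved e) \<Longrightarrow> g \<in> E \<Longrightarrow> (g, e) \<in> R"
  shows "\<exists>\<phi>. (\<forall>g. g \<notin> E \<longrightarrow> \<phi> g = base g) \<and> (\<forall>e\<in>E. \<phi> e = frag_extend \<phi> (solved e))"
proof -
  define F where "F \<phi> g = (if g \<in> E then frag_extend (\<lambda>h. if h \<in> E then \<phi> h else base h) (solved g) else base g)"
    for \<phi> g
  have "adm_wf R F"
    unfolding adm_wf_def F_def using below by (auto intro!: frag_extend_eq)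
  then have fixpoint: "wfrec R F = F (wfrec R F)" by (rule wfrec_fixpoint[OF assms(1)])
  have outside: "wfrec R F g = base g" if "g \<notin> E" for g
    using that by (subst fixpoint) (simp add: F_def)
  have "wfrec R F e = frag_extend (wfrec R F) (solved e)" if "e \<in> E" for e
    using that outside by (subst fixpoint) (auto simp: F_def intro!: frag_extend_eq)
  with outside show ?thesis by blast
qed

section \<open>Generators and relators of G_x\<close>

lemma restr_length [simp]: "length (restr \<eta> m n) = length \<eta>"
  by (simp add: restr_def)

lemma restr_nth:
  "i < length \<eta> \<Longrightarrow> restr \<eta> m n ! i = (if i = m then Inr (map (\<eta> ! i) [0..<n]) else Inl (\<eta> ! i))"
  by (simp add: restr_def)

lemma restr_eq_restrD:
  assumes "restr \<eta> m n = restr \<rho> m' n'" "m < length \<eta>" "m' < length \<rho>"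
  shows "m = m' \<and> n = n' \<and> agree_off m \<rho> \<eta> \<and> (\<forall>i<n. (\<rho> ! m) i = (\<eta> ! m) i)"
proof -
  have len: "length \<rho> = length \<eta>" using arg_cong[OF assms(1), of length] by simp
  have nth: "restr \<eta> m n ! i = restr \<rho> m' n' ! i" for i using assms(1) by simp
  have mm: "m = m'"
  proof (rule ccontr)
    assume "m \<noteq> m'"
    then show False using nth[of m] assms(2) len by (simp add: restr_nth)
  qed
  have prefix: "map (\<eta> ! m) [0..<n] = map (\<rho> ! m) [0..<n']"
    using nth[of m] assms(2) len mm by (simp add: restr_nth)
  have nn: "n = n'" using arg_cong[OF prefix, of length] by simp
  have "(\<rho> ! m) i = (\<eta> ! m) i" if "i < n" for i
    using arg_cong[OF prefix, of "\<lambda>xs. xs ! i"] that nn by simp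
  moreover have "agree_off m \<rho> \<eta>"
    unfolding agree_off_def
  proof (intro conjI allI impI)
    fix i assume "i < length \<eta>" "i \<noteq> m"
    then show "\<rho> ! i = \<eta> ! i" using nth[of i] len mm by (simp add: restr_nth)
  qed (rule len)
  ultimately show ?thesis using mm nn by blast
qed

definition tuple_gens :: "nat \<Rightarrow> 's tup \<Rightarrow> 's gen set" where
  "tuple_gens k \<eta> = range (GY \<eta>) \<union> {GX (restr \<eta> i n) | i n. i \<le> k}"

definition gens_over :: "nat \<Rightarrow> 's tup set \<Rightarrow> (nat \<Rightarrow> 's) set \<Rightarrow> 's gen set" where
  "gens_over k Lam V = insert GZ (\<Union>\<eta>\<in>{\<eta>\<in>Lam. set \<eta> \<subseteq> V}. tuple_gens k \<eta>)"

definition relator_gens :: "nat \<Rightarrow> 's tup \<Rightarrow> nat \<Rightarrow> 's gen set" where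
  "relator_gens k \<eta> n = {GY \<eta> (Suc n), GY \<eta> n, GZ} \<union> {GX (restr \<eta> i n) | i. i \<le> k}"

lemma gens_over_subset_gens: "gens_over k Lam V \<subseteq> gens k Lam"
proof -
  have "GX (restr \<eta> i n) \<in> gens k Lam" if "\<eta> \<in> Lam" "i \<le> k" for \<eta> i n
    using that unfolding gens_def Lambda_le_def by blast
  then show ?thesis by (auto simp: gens_over_def tuple_gens_def gens_def)
qed

lemma gens_over_mono: "V \<subseteq> V' \<Longrightarrow> gens_over k Lam V \<subseteq> gens_over k Lam V'"
  by (auto simp: gens_over_def)

lemma GY_in_gens_over: "GY \<eta> n \<in> gens_over k Lam V \<Longrightarrow> \<eta> \<in> Lam \<and> set \<eta> \<subseteq> V"
  by (auto simp: gens_over_def tuple_gens_def)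

lemma relator_gens_subset_gens_over:
  "\<eta> \<in> Lam \<Longrightarrow> set \<eta> \<subseteq> V \<Longrightarrow> relator_gens k \<eta> n \<subseteq> gens_over k Lam V"
  by (auto simp: relator_gens_def gens_over_def tuple_gens_def)

lemma keys_rel_elem: "Poly_Mapping.keys (rel_elem k a \<eta> n) \<subseteq> relator_gens k \<eta> n"
proof -
  have single: "Poly_Mapping.keys (Poly_Mapping.single g c) \<subseteq> {g}" for g :: "'s gen" and c :: int
    by simp
  show ?thesis
    unfolding rel_elem_def relator_gens_def
    by (intro order.trans[OF keys_diff] Un_least order.trans[OF keys_sum] UN_least
        order.trans[OF single]) auto
qed

lemma rel_elem_in_Rel: "\<eta> \<in> Lam \<Longrightarrow> rel_elem k a \<eta> n \<in> Rel k Lam a"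
  unfolding Rel_def by (rule generate.incl) blast

lemma keys_rel_elem_subset_gens: "\<eta> \<in> Lam \<Longrightarrow> Poly_Mapping.keys (rel_elem k a \<eta> n) \<subseteq> gens k Lam"
  using order.trans[OF keys_rel_elem order.trans[OF relator_gens_subset_gens_over gens_over_subset_gens]]
  by blast

lemma subgroup_Rel: "subgroup (Rel k Lam a) (free_Abelian_group (gens k Lam))"
  unfolding Rel_def FG_def
proof (rule group.generate_is_subgroup)
  show "{rel_elem k a \<eta> n |\<eta> n. \<eta> \<in> Lam} \<subseteq> carrier (free_Abelian_group (gens k Lam))"
  proof
    fix f assume "f \<in> {rel_elem k a \<eta> n |\<eta> n. \<eta> \<in> Lam}"
    then obtain \<eta> n where "f = rel_elem k a \<eta> n" "\<eta> \<in> Lam" by blast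
    then show "f \<in> carrier (free_Abelian_group (gens k Lam))" by (simp add: keys_rel_elem_subset_gens)
  qed
qed simp

lemma Rel_eq_relator_combination:
  assumes "f \<in> Rel k Lam a"
  shows "\<exists>t. Poly_Mapping.keys t \<subseteq> Lam \<times> UNIV \<and> f = frag_extend (case_prod (rel_elem k a)) t"
  using assms unfolding Rel_def
proof (induction rule: generate.induct)
  case one
  then show ?case by (intro exI[of _ 0]) (simp add: FG_def)
next
  case (incl h)
  then obtain \<eta> n where "h = rel_elem k a \<eta> n" "\<eta> \<in> Lam" by blast
  then show ?case by (intro exI[of _ "frag_of (\<eta>, n)"]) simp
next
  case (inv h)
  then obtain \<eta> n where h: "h = rel_elem k a \<eta> n" "\<eta> \<in> Lam" by blast
  then have "inv\<^bsub>FG k Lam\<^esub> h = - h" using keys_rel_elem_subset_gens[OF h(2)] by (simp add: FG_def)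
  then show ?case using h by (intro exI[of _ "- frag_of (\<eta>, n)"]) (simp add: frag_extend_minus)
next
  case (eng h1 h2)
  then obtain t1 t2 where "Poly_Mapping.keys t1 \<subseteq> Lam \<times> UNIV" "h1 = frag_extend (case_prod (rel_elem k a)) t1"
    "Poly_Mapping.keys t2 \<subseteq> Lam \<times> UNIV" "h2 = frag_extend (case_prod (rel_elem k a)) t2" by blast
  then show ?case
    using keys_add[of t1 t2] by (intro exI[of _ "t1 + t2"]) (auto simp: FG_def frag_extend_add)
qed

lemma lookup_rel_elem_GY:
  "Poly_Mapping.lookup (rel_elem k a \<rho> n') (GY \<eta> n) =
     (if 0 < n \<and> (\<rho>, n') = (\<eta>, n - 1) then int (fact (n - 1)) else 0) - (if (\<rho>, n') = (\<eta>, n) then 1 else 0)"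
  by (auto simp: rel_elem_def lookup_minus lookup_sum lookup_single when_def)

lemma lookup_relator_combination_GY:
  "Poly_Mapping.lookup (frag_extend (case_prod (rel_elem k a)) t) (GY \<eta> n) =
     (if 0 < n then Poly_Mapping.lookup t (\<eta>, n - 1) * int (fact (n - 1)) else 0) - Poly_Mapping.lookup t (\<eta>, n)"
proof (induction t rule: frag_induction[OF subset_UNIV])
  case (2 x)
  then show ?case by (cases x) (auto simp: lookup_rel_elem_GY)
next
  case (3 f g)
  then show ?case by (cases n) (simp_all add: frag_extend_diff lookup_minus algebra_simps)
qed simp

lemma relator_combination_coefficient_eq_0:
  assumes "\<And>n. Poly_Mapping.lookup (frag_extend (case_prod (rel_elem k a)) t) (GY \<eta> n) = 0"
  shows "Poly_Mapping.lookup t (\<eta>, n) = 0"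
proof (induction n)
  case 0
  then show ?case using assms[of 0] by (simp add: lookup_relator_combination_GY)
next
  case (Suc n)
  then show ?case using assms[of "Suc n"] by (simp add: lookup_relator_combination_GY)
qed

lemma Rel_relator_support:
  assumes "f \<in> Rel k Lam a"
  obtains t where "f = frag_extend (case_prod (rel_elem k a)) t"
    "\<And>\<eta> n. (\<eta>, n) \<in> Poly_Mapping.keys t \<Longrightarrow> \<eta> \<in> Lam \<and> (\<exists>n'. GY \<eta> n' \<in> Poly_Mapping.keys f)"
proof -
  obtain t where t: "Poly_Mapping.keys t \<subseteq> Lam \<times> UNIV" "f = frag_extend (case_prod (rel_elem k a)) t"
    using Rel_eq_relator_combination[OF assms] by blast
  have "\<exists>n'. GY \<eta> n' \<in> Poly_Mapping.keys f" if "(\<eta>, n) \<in> Poly_Mapping.keys t" for \<eta> n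
  proof (rule ccontr)
    assume "\<not> ?thesis"
    then have "Poly_Mapping.lookup t (\<eta>, n) = 0"
      using t(2) by (intro relator_combination_coefficient_eq_0) (auto simp: in_keys_iff)
    then show False using that by (simp add: in_keys_iff)
  qed
  with t that show ?thesis by blast
qed

locale Gx_presentation =
  fixes k :: nat and Lam :: "'s tup set" and a :: "'s tup \<Rightarrow> nat \<Rightarrow> int"
begin

sublocale free_presentation "gens k Lam" "Rel k Lam a"
  by (rule free_presentation.intro) (rule subgroup_Rel)

lemma Gx_eq: "Gx k Lam a = free_Abelian_group (gens k Lam) Mod Rel k Lam a"
  by (simp add: Gx_def FG_def)

lemma G_U_eq: "G_U k Lam a V = proj ` carrier (free_Abelian_group (gens_over k Lam V))"
proof -
  have "{gimg k Lam a GZ} \<union> {gimg k Lam a (GY \<eta> n) | \<eta> n. \<eta> \<in> Lam \<and> set \<eta> \<subseteq> V}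
      \<union> {gimg k Lam a (GX (restr \<eta> m n)) | \<eta> m n. \<eta> \<in> Lam \<and> set \<eta> \<subseteq> V \<and> m \<le> k}
    = proj ` frag_of ` gens_over k Lam V"
    unfolding gimg_def proj_def FG_def gens_over_def tuple_gens_def by blast
  then have "G_U k Lam a V = generate (Gx k Lam a) (proj ` frag_of ` gens_over k Lam V)"
    by (simp add: G_U_def)
  also have "\<dots> = proj ` generate (free_Abelian_group (gens k Lam)) (frag_of ` gens_over k Lam V)"
    unfolding Gx_eq by (rule proj.generate_img) (use gens_over_subset_gens[of k Lam V] in auto)
  finally show ?thesis by (simp add: generate_frag_of gens_over_subset_gens)
qed

lemma G_Uu_eq:
  "G_Uu k Lam a U u = proj ` carrier (free_Abelian_group (\<Union>\<nu>\<in>u. gens_over k Lam (U \<union> (u - {\<nu>}))))"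
proof -
  have "G_Uu k Lam a U u
      = generate (Gx k Lam a) (proj ` (\<Union>\<nu>\<in>u. carrier (free_Abelian_group (gens_over k Lam (U \<union> (u - {\<nu>}))))))"
    by (simp add: G_Uu_def G_U_eq image_UN)
  also have "\<dots> = proj ` generate (free_Abelian_group (gens k Lam))
      (\<Union>\<nu>\<in>u. carrier (free_Abelian_group (gens_over k Lam (U \<union> (u - {\<nu>})))))"
    unfolding Gx_eq by (rule proj.generate_img) (use gens_over_subset_gens in fastforce)
  finally show ?thesis by (simp add: generate_UN_carrier_free_Abelian_group gens_over_subset_gens)
qed

lemma G_Uu_empty: "G_Uu k Lam a U {} = {\<one>\<^bsub>Gx k Lam a\<^esub>}"
  unfolding G_Uu_def Gx_eq by (simp add: proj.H.generate_empty)

end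

section \<open>Elimination of generators\<close>

locale elimination = Gx_presentation k Lam a
  for k :: nat and Lam :: "'s tup set" and a :: "'s tup \<Rightarrow> nat \<Rightarrow> int" +
  fixes U u :: "(nat \<Rightarrow> 's) set" and r :: "('s tup \<times> 's tup) set"
    and m :: "'s tup \<Rightarrow> nat" and N :: "'s tup \<Rightarrow> nat"
  assumes length_Lam: "\<And>\<eta>. \<eta> \<in> Lam \<Longrightarrow> length \<eta> = Suc k"
    and disjoint: "U \<inter> u = {}"
    and wf_r: "wf r"
    and total_r: "total_on (tuples k U u) r"
    and coordinate: "\<And>\<eta>. \<eta> \<in> tuples k U u \<Longrightarrow> m \<eta> \<le> k \<and> covers_off u \<eta> (m \<eta>)"
    and separating: "\<And>\<eta> \<rho>. \<eta> \<in> tuples k U u \<Longrightarrow> \<rho> \<in> tuples k U u \<Longrightarrow> (\<rho>, \<eta>) \<in> r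
      \<Longrightarrow> agree_off (m \<eta>) \<rho> \<eta> \<Longrightarrow> \<exists>i<N \<eta>. (\<rho> ! m \<eta>) i \<noteq> (\<eta> ! m \<eta>) i"
begin

definition "Lam_W = {\<eta> \<in> Lam. set \<eta> \<subseteq> U \<union> u}"
definition "Lam_T = {\<eta> \<in> Lam_W. u \<subseteq> set \<eta>}"
definition "gens_W = gens_over k Lam (U \<union> u)"
definition "gens_K = (\<Union>\<nu>\<in>u. gens_over k Lam (U \<union> (u - {\<nu>})))"

definition elim :: "'s tup \<Rightarrow> nat \<Rightarrow> 's gen" where
  "elim \<eta> n = (if n < N \<eta> then GY \<eta> n else GX (restr \<eta> (m \<eta>) n))"

definition "elim_gens = case_prod elim ` (Lam_T \<times> UNIV)"
definition "basis = gens_W - gens_K - elim_gens"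
definition "relator_of = the_inv_into (Lam_T \<times> UNIV) (case_prod elim)"

text \<open>The relator of (\<eta>, n) has coefficient -1 at \<open>elim \<eta> n\<close>, so adding it to that generator
  expresses the generator through the other generators of the relation.\<close>

definition solved :: "'s gen \<Rightarrow> 's gen \<Rightarrow>\<^sub>0 int" where
  "solved e = frag_of e + case_prod (rel_elem k a) (relator_of e)"

text \<open>Within one tuple, \<open>GY \<eta> n\<close> is solved through \<open>GY \<eta> (Suc n)\<close>; hence the component
  \<open>N \<eta> - n\<close>.\<close>

definition "elim_order = inv_image (inv_image (r <*lex*> less_than) (\<lambda>(\<eta>, n). (\<eta>, N \<eta> - n))) relator_of"

definition reduce :: "'s gen \<Rightarrow> 's gen \<Rightarrow>\<^sub>0 int" where
  "reduce = (SOME \<phi>. (\<forall>g. g \<notin> elim_gens \<longrightarrow> \<phi> g = (if g \<in> basis then frag_of g else 0))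
     \<and> (\<forall>e\<in>elim_gens. \<phi> e = frag_extend \<phi> (solved e)))"

lemma Lam_T_tuples: "\<eta> \<in> Lam_T \<Longrightarrow> \<eta> \<in> tuples k U u"
  by (auto simp: Lam_T_def Lam_W_def tuples_def length_Lam)

lemma Lam_T_coordinate:
  assumes "\<eta> \<in> Lam_T"
  shows "m \<eta> \<le> k" "m \<eta> < length \<eta>"
proof -
  show "m \<eta> \<le> k" using coordinate[OF Lam_T_tuples[OF assms]] by blast
  then show "m \<eta> < length \<eta>" using assms by (simp add: Lam_T_def Lam_W_def length_Lam)
qed

lemma shared_restr_later:
  assumes "\<eta> \<in> Lam_T" "N \<eta> \<le> n" "\<rho> \<in> Lam_W" "i \<le> k" "restr \<eta> (m \<eta>) n = restr \<rho> i n'"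
  shows "\<rho> = \<eta> \<or> (\<rho> \<in> Lam_T \<and> (\<eta>, \<rho>) \<in> r)"
proof -
  have \<eta>: "\<eta> \<in> tuples k U u" by (rule Lam_T_tuples[OF assms(1)])
  have "i < length \<rho>" using assms(3,4) by (simp add: Lam_W_def length_Lam)
  then have eq: "m \<eta> = i \<and> n = n' \<and> agree_off (m \<eta>) \<rho> \<eta> \<and> (\<forall>j<n. (\<rho> ! m \<eta>) j = (\<eta> ! m \<eta>) j)"
    using restr_eq_restrD[OF assms(5) Lam_T_coordinate(2)[OF assms(1)]] by blast
  then have "u \<subseteq> set \<rho>" using coordinate[OF \<eta>] covers_off_agree_off by blast
  then have \<rho>: "\<rho> \<in> Lam_T" using assms(3) by (simp add: Lam_T_def)
  show ?thesis
  proof (cases "\<rho> = \<eta>")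
    case False
    have "(\<rho>, \<eta>) \<notin> r"
    proof
      assume "(\<rho>, \<eta>) \<in> r"
      then obtain j where "j < N \<eta>" "(\<rho> ! m \<eta>) j \<noteq> (\<eta> ! m \<eta>) j"
        using separating[OF \<eta> Lam_T_tuples[OF \<rho>]] eq by blast
      then show False using eq assms(2) by auto
    qed
    then show ?thesis using total_r \<eta> Lam_T_tuples[OF \<rho>] False \<rho> by (auto simp: total_on_def)
  qed simp
qed

lemma inj_on_elim: "inj_on (case_prod elim) (Lam_T \<times> UNIV)"
proof (rule inj_onI, clarsimp)
  fix \<eta> n \<rho> n' assume \<eta>: "\<eta> \<in> Lam_T" and \<rho>: "\<rho> \<in> Lam_T" and eq: "elim \<eta> n = elim \<rho> n'"
  show "\<eta> = \<rho> \<and> n = n'"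
  proof (cases "n < N \<eta>")
    case True
    then show ?thesis using eq by (auto simp: elim_def split: if_splits)
  next
    case False
    then have n': "\<not> n' < N \<rho>" and restr: "restr \<eta> (m \<eta>) n = restr \<rho> (m \<rho>) n'"
      using eq by (auto simp: elim_def split: if_splits)
    have "\<rho> = \<eta> \<or> (\<eta>, \<rho>) \<in> r" "\<eta> = \<rho> \<or> (\<rho>, \<eta>) \<in> r"
      using shared_restr_later[OF \<eta> _ _ _ restr] shared_restr_later[OF \<rho> _ _ _ restr[symmetric]]
        False n' \<eta> \<rho> coordinate[OF Lam_T_tuples] by (auto simp: Lam_T_def)
    then have "\<eta> = \<rho>" using wf_asym[OF wf_r] by blast
    then show ?thesis using restr_eq_restrD[OF restr Lam_T_coordinate(2)[OF \<eta>] Lam_T_coordinate(2)[OF \<rho>]] by simp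
  qed
qed

lemma relator_of_elim: "\<eta> \<in> Lam_T \<Longrightarrow> relator_of (elim \<eta> n) = (\<eta>, n)"
  unfolding relator_of_def using the_inv_into_f_f[OF inj_on_elim, of "(\<eta>, n)"] by simp

lemma solved_elim: "\<eta> \<in> Lam_T \<Longrightarrow> solved (elim \<eta> n) = frag_of (elim \<eta> n) + rel_elem k a \<eta> n"
  by (simp add: solved_def relator_of_elim)

lemma lookup_rel_elem_elim:
  assumes "\<eta> \<in> Lam_T"
  shows "Poly_Mapping.lookup (rel_elem k a \<eta> n) (elim \<eta> n) = -1"
proof (cases "n < N \<eta>")
  case True
  then show ?thesis by (simp add: elim_def rel_elem_def lookup_minus lookup_sum lookup_single)
next
  case False
  have mk: "m \<eta> \<le> k" using Lam_T_coordinate(1)[OF assms] .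
  have "restr \<eta> (m \<eta>) n = restr \<eta> i n \<longleftrightarrow> i = m \<eta>" if "i \<le> k" for i
    using restr_eq_restrD[of \<eta> "m \<eta>" n \<eta> i n] that mk assms by (auto simp: Lam_T_def Lam_W_def length_Lam)
  then have "(\<Sum>i\<le>k. if restr \<eta> (m \<eta>) n = restr \<eta> i n then 1 else 0) = (\<Sum>i\<le>k. if i = m \<eta> then 1 else (0::int))"
    by (intro sum.cong) auto
  also have "\<dots> = 1" using mk by simp
  finally show ?thesis using False by (simp add: elim_def rel_elem_def lookup_minus lookup_sum lookup_single)
qed

lemma keys_solved_elim:
  assumes "\<eta> \<in> Lam_T"
  shows "Poly_Mapping.keys (solved (elim \<eta> n)) \<subseteq> relator_gens k \<eta> n - {elim \<eta> n}"
proof -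
  have "Poly_Mapping.lookup (solved (elim \<eta> n)) (elim \<eta> n) = 0"
    using lookup_rel_elem_elim[OF assms] by (simp add: solved_elim[OF assms] lookup_add)
  moreover have "Poly_Mapping.keys (solved (elim \<eta> n)) \<subseteq> insert (elim \<eta> n) (relator_gens k \<eta> n)"
    unfolding solved_elim[OF assms] using keys_add keys_rel_elem by fastforce
  ultimately show ?thesis by (auto simp: in_keys_iff)
qed

lemma elim_dependency:
  assumes \<eta>: "\<eta> \<in> Lam_T" and g: "g \<in> relator_gens k \<eta> n - {elim \<eta> n}"
    and \<rho>: "\<rho> \<in> Lam_T" and "g = elim \<rho> n'"
  shows "(\<rho>, \<eta>) \<in> r \<or> (\<rho> = \<eta> \<and> n' = Suc n \<and> n' < N \<eta>)"
proof (cases "n' < N \<rho>")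
  case True
  then show ?thesis using assms by (auto simp: relator_gens_def elim_def)
next
  case False
  then obtain i where i: "i \<le> k" "restr \<rho> (m \<rho>) n' = restr \<eta> i n"
    using assms by (auto simp: relator_gens_def elim_def)
  have "\<eta> \<in> Lam_W" using \<eta> by (simp add: Lam_T_def)
  then have "\<eta> = \<rho> \<or> (\<rho>, \<eta>) \<in> r"
    using shared_restr_later[OF \<rho> _ _ i(1,2)] False by auto
  moreover have "\<eta> \<noteq> \<rho>"
  proof
    assume "\<eta> = \<rho>"
    then have "m \<eta> = i \<and> n' = n"
      using restr_eq_restrD[OF i(2)] Lam_T_coordinate(2)[OF \<rho>] i(1) \<eta> by (auto simp: Lam_T_def Lam_W_def length_Lam)
    then show False using g assms(4) \<open>\<eta> = \<rho>\<close> i False by (simp add: elim_def)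
  qed
  ultimately show ?thesis by blast
qed

lemma elim_gens_iff: "e \<in> elim_gens \<longleftrightarrow> (\<exists>\<eta> n. \<eta> \<in> Lam_T \<and> e = elim \<eta> n)"
  by (auto simp: elim_gens_def)

lemma elim_order_solved:
  assumes "e \<in> elim_gens" "g \<in> Poly_Mapping.keys (solved e)" "g \<in> elim_gens"
  shows "(g, e) \<in> elim_order"
proof -
  obtain \<eta> n \<rho> n' where \<eta>: "\<eta> \<in> Lam_T" "e = elim \<eta> n" and \<rho>: "\<rho> \<in> Lam_T" "g = elim \<rho> n'"
    using assms(1,3) by (auto simp: elim_gens_iff)
  then have "(\<rho>, \<eta>) \<in> r \<or> (\<rho> = \<eta> \<and> n' = Suc n \<and> n' < N \<eta>)"
    using elim_dependency keys_solved_elim assms(2) by blast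
  then show ?thesis using \<eta> \<rho> by (auto simp: elim_order_def relator_of_elim)
qed

lemma wf_elim_order: "wf elim_order"
  unfolding elim_order_def by (intro wf_inv_image wf_lex_prod wf_r wf_less_than)

lemma reduce:
  "\<And>g. g \<notin> elim_gens \<Longrightarrow> reduce g = (if g \<in> basis then frag_of g else 0)"
  "\<And>e. e \<in> elim_gens \<Longrightarrow> reduce e = frag_extend reduce (solved e)"
proof -
  have "\<exists>\<phi>. (\<forall>g. g \<notin> elim_gens \<longrightarrow> \<phi> g = (if g \<in> basis then frag_of g else 0))
     \<and> (\<forall>e\<in>elim_gens. \<phi> e = frag_extend \<phi> (solved e))"
    by (rule wf_triangular_solution[OF wf_elim_order elim_order_solved])
  then have "(\<forall>g. g \<notin> elim_gens \<longrightarrow> reduce g = (if g \<in> basis then frag_of g else 0))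
     \<and> (\<forall>e\<in>elim_gens. reduce e = frag_extend reduce (solved e))"
    unfolding reduce_def by (rule someI_ex)
  then show "\<And>g. g \<notin> elim_gens \<Longrightarrow> reduce g = (if g \<in> basis then frag_of g else 0)"
    "\<And>e. e \<in> elim_gens \<Longrightarrow> reduce e = frag_extend reduce (solved e)" by auto
qed

lemma elim_induct [case_names kept elim]:
  assumes "\<And>g. g \<notin> elim_gens \<Longrightarrow> P g"
    and "\<And>e. e \<in> elim_gens \<Longrightarrow> (\<And>h. h \<in> Poly_Mapping.keys (solved e) \<Longrightarrow> P h) \<Longrightarrow> P e"
  shows "P g"
  using wf_elim_order
proof (induction g rule: wf_induct_rule)
  case (less e)
  show ?case
  proof (cases "e \<in> elim_gens")
    case True
    then show ?thesis using assms less elim_order_solved by metis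
  qed (rule assms(1))
qed

lemma keys_reduce: "Poly_Mapping.keys (reduce g) \<subseteq> basis"
proof (induction g rule: elim_induct)
  case (elim e)
  have "Poly_Mapping.keys (reduce e) = Poly_Mapping.keys (frag_extend reduce (solved e))"
    using reduce(2)[OF elim(1)] by simp
  also have "\<dots> \<subseteq> (\<Union>h\<in>Poly_Mapping.keys (solved e). Poly_Mapping.keys (reduce h))"
    by (rule keys_frag_extend)
  finally show ?case using elim(2) by blast
qed (simp add: reduce(1))

lemma gens_K_subset_gens_W: "gens_K \<subseteq> gens_W"
  unfolding gens_K_def gens_W_def by (intro UN_least gens_over_mono) auto

lemma gens_K_disjoint_elim_gens: "g \<in> gens_K \<Longrightarrow> g \<notin> elim_gens"
proof
  assume "g \<in> gens_K" "g \<in> elim_gens"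
  then obtain \<nu> \<eta> n where \<nu>: "\<nu> \<in> u" "g \<in> gens_over k Lam (U \<union> (u - {\<nu>}))"
    and \<eta>: "\<eta> \<in> Lam_T" "g = elim \<eta> n"
    by (auto simp: gens_K_def elim_gens_iff)
  then obtain \<rho> where \<rho>: "\<rho> \<in> Lam" "set \<rho> \<subseteq> U \<union> (u - {\<nu>})" "g \<in> tuple_gens k \<rho>"
    by (auto simp: gens_over_def elim_def split: if_splits)
  then have "\<rho> \<in> Lam_W" "\<rho> \<notin> Lam_T" using \<nu>(1) disjoint by (auto simp: Lam_W_def Lam_T_def)
  moreover have "\<rho> = \<eta> \<or> \<rho> \<in> Lam_T"
  proof (cases "n < N \<eta>")
    case True
    then show ?thesis using \<rho>(3) \<eta>(2) by (auto simp: tuple_gens_def elim_def)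
  next
    case False
    then obtain i n' where i: "i \<le> k" "restr \<eta> (m \<eta>) n = restr \<rho> i n'"
      using \<rho>(3) \<eta>(2) by (auto simp: tuple_gens_def elim_def)
    have "N \<eta> \<le> n" using False by simp
    then show ?thesis using shared_restr_later[OF \<eta>(1) _ \<open>\<rho> \<in> Lam_W\<close> i] by blast
  qed
  ultimately show False using \<eta>(1) by blast
qed

lemma gens_K_subset_gens: "gens_K \<subseteq> gens k Lam"
  using order.trans[OF gens_K_subset_gens_W[unfolded gens_W_def] gens_over_subset_gens] .

lemma reduce_gens_K: "g \<in> gens_K \<Longrightarrow> reduce g = 0"
  using gens_K_disjoint_elim_gens by (simp add: reduce(1) basis_def)

lemma reduce_basis: "b \<in> basis \<Longrightarrow> reduce b = frag_of b"
  by (simp add: reduce(1) basis_def)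

lemma relator_gens_subset_gens_W: "\<eta> \<in> Lam_W \<Longrightarrow> relator_gens k \<eta> n \<subseteq> gens_W"
  unfolding gens_W_def Lam_W_def by (intro relator_gens_subset_gens_over) auto

lemma relator_gens_subset_gens_K: "\<eta> \<in> Lam_W - Lam_T \<Longrightarrow> relator_gens k \<eta> n \<subseteq> gens_K"
proof -
  assume "\<eta> \<in> Lam_W - Lam_T"
  then obtain \<nu> where "\<nu> \<in> u" "\<nu> \<notin> set \<eta>" "\<eta> \<in> Lam" "set \<eta> \<subseteq> U \<union> u"
    by (auto simp: Lam_W_def Lam_T_def)
  then have "relator_gens k \<eta> n \<subseteq> gens_over k Lam (U \<union> (u - {\<nu>}))"
    by (intro relator_gens_subset_gens_over) auto
  then show ?thesis using \<open>\<nu> \<in> u\<close> by (auto simp: gens_K_def)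
qed

lemma keys_solved: "e \<in> elim_gens \<Longrightarrow> Poly_Mapping.keys (solved e) \<subseteq> gens_W"
  using keys_solved_elim relator_gens_subset_gens_W by (fastforce simp: elim_gens_iff Lam_T_def)

lemma reduce_rel_elem: "\<eta> \<in> Lam_W \<Longrightarrow> frag_extend reduce (rel_elem k a \<eta> n) = 0"
proof (cases "\<eta> \<in> Lam_T")
  case True
  then have "reduce (elim \<eta> n) = frag_extend reduce (solved (elim \<eta> n))"
    by (intro reduce(2)) (auto simp: elim_gens_iff)
  then show ?thesis using True by (simp add: solved_elim frag_extend_add)
next
  case False
  assume "\<eta> \<in> Lam_W"
  with False have "Poly_Mapping.keys (rel_elem k a \<eta> n) \<subseteq> gens_K"
    using keys_rel_elem relator_gens_subset_gens_K by blast
  then show ?thesis using reduce_gens_K by (intro frag_extend_eq_0) auto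
qed

lemma reduce_Rel:
  assumes "f \<in> Rel k Lam a" "Poly_Mapping.keys f \<subseteq> gens_W"
  shows "frag_extend reduce f = 0"
proof -
  obtain t where t: "f = frag_extend (case_prod (rel_elem k a)) t"
    and supp: "\<And>\<eta> n. (\<eta>, n) \<in> Poly_Mapping.keys t \<Longrightarrow> \<eta> \<in> Lam \<and> (\<exists>n'. GY \<eta> n' \<in> Poly_Mapping.keys f)"
    using Rel_relator_support[OF assms(1)] by blast
  have W: "\<eta> \<in> Lam_W" if "(\<eta>, n) \<in> Poly_Mapping.keys t" for \<eta> n
    using supp[OF that] assms(2) GY_in_gens_over by (fastforce simp: Lam_W_def gens_W_def)
  have "frag_extend (\<lambda>p. frag_extend reduce (case_prod (rel_elem k a) p)) t = 0"
  proof (rule frag_extend_eq_0)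
    fix p assume "p \<in> Poly_Mapping.keys t"
    then show "frag_extend reduce (case_prod (rel_elem k a) p) = 0"
      using W reduce_rel_elem by (cases p) auto
  qed
  then show ?thesis by (simp add: t frag_extend_frag_extend)
qed

lemma reduce_congruent: "g \<in> gens_W \<Longrightarrow> frag_of g - reduce g \<in> vanishing gens_K"
proof (induction g rule: elim_induct)
  case (kept g)
  show ?case
  proof (cases "g \<in> gens_K")
    case True
    then show ?thesis using frag_of_vanishing[OF True gens_K_subset_gens] by (simp add: reduce_gens_K)
  next
    case False
    then have "frag_of g - reduce g = 0" using kept by (simp add: reduce(1) basis_def)
    then show ?thesis using subgroup.one_closed[OF subgroup_vanishing[OF gens_K_subset_gens]] by simp
  qed
next
  case (elim e)
  obtain \<eta> n where \<eta>: "\<eta> \<in> Lam_T" "e = elim \<eta> n" using elim(1) by (auto simp: elim_gens_iff)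
  have "frag_extend (\<lambda>h. frag_of h - reduce h) (solved e) \<in> vanishing gens_K"
    using elim keys_solved[OF elim(1)] subgroup_vanishing[OF gens_K_subset_gens]
    by (intro subgroup_free_Abelian_group_frag_extend) auto
  moreover have "rel_elem k a \<eta> n \<in> Rel k Lam a"
    using \<eta>(1) by (intro rel_elem_in_Rel) (simp add: Lam_T_def Lam_W_def)
  then have "rel_elem k a \<eta> n \<in> vanishing gens_K" using R_subset_vanishing by blast
  ultimately have "frag_extend (\<lambda>h. frag_of h - reduce h) (solved e) - rel_elem k a \<eta> n \<in> vanishing gens_K"
    by (rule subgroup_free_Abelian_group_diff[OF subgroup_vanishing[OF gens_K_subset_gens]])
  moreover have "frag_extend (\<lambda>h. frag_of h - reduce h) (solved e) - rel_elem k a \<eta> n = frag_of e - reduce e"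
    using reduce(2)[OF elim(1)] \<eta> by (simp add: frag_extend_diff_fun solved_elim flip: frag_expansion)
  ultimately show ?case by simp
qed

theorem G_U_quotient_onto_basis:
  obtains \<Psi> where
    "group_hom (subgroup_generated (Gx k Lam a) (G_U k Lam a (U \<union> u))) (free_Abelian_group basis) \<Psi>"
    "\<Psi> ` carrier (subgroup_generated (Gx k Lam a) (G_U k Lam a (U \<union> u))) = carrier (free_Abelian_group basis)"
    "kernel (subgroup_generated (Gx k Lam a) (G_U k Lam a (U \<union> u))) (free_Abelian_group basis) \<Psi>
      = G_Uu k Lam a U u"
proof -
  have "gens_W \<subseteq> gens k Lam" by (simp add: gens_W_def gens_over_subset_gens)
  moreover have "basis \<subseteq> gens_W" by (auto simp: basis_def)
  ultimately obtain \<Psi> where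
    "group_hom (subgroup_generated (Gx k Lam a) (G_U k Lam a (U \<union> u))) (free_Abelian_group basis) \<Psi>"
    "\<Psi> ` carrier (subgroup_generated (Gx k Lam a) (G_U k Lam a (U \<union> u))) = carrier (free_Abelian_group basis)"
    "kernel (subgroup_generated (Gx k Lam a) (G_U k Lam a (U \<union> u))) (free_Abelian_group basis) \<Psi>
      = G_Uu k Lam a U u"
    unfolding Gx_eq G_U_eq G_Uu_eq gens_W_def[symmetric] gens_K_def[symmetric]
    by (rule quotient_free_by_elimination[OF _ gens_K_subset_gens_W _ reduce_basis keys_reduce reduce_gens_K
          reduce_Rel reduce_congruent])
  then show thesis by (rule that)
qed

end

lemma free_abgroupI:
  assumes "G \<cong> free_Abelian_group X"
  shows "free_abgroup G"
proof -
  obtain h where "h \<in> iso G (free_Abelian_group X)" using assms unfolding is_iso_def by blast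
  then have bij: "bij_betw h (carrier G) (carrier (free_Abelian_group X))" by (simp add: iso_def)
  define B where "B = inv_into (carrier G) h ` frag_of ` X"
  have "inj_on (inv_into (carrier G) h \<circ> frag_of) X"
  proof (rule comp_inj_on)
    show "inj_on frag_of X" by (simp add: inj_on_def frag_of_eq)
    show "inj_on (inv_into (carrier G) h) (frag_of ` X)"
      using bij_betw_imp_inj_on[OF bij_betw_inv_into[OF bij]] by (rule inj_on_subset) auto
  qed
  then have "bij_betw (inv_into (carrier G) h \<circ> frag_of) X B"
    unfolding B_def image_comp by (rule bij_betw_imageI) simp
  then have "free_Abelian_group X \<cong> free_Abelian_group B"
    by (auto simp: isomorphic_free_Abelian_groups eqpoll_def)
  moreover have "B \<subseteq> carrier G"
    unfolding B_def using bij by (auto intro: inv_into_into simp: bij_betw_def)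
  ultimately show ?thesis using assms iso_trans unfolding free_abgroup_def by blast
qed

lemma G_U_quotient_onto_free:
  fixes Lam :: "'s tup set" and U u :: "(nat \<Rightarrow> 's) set"
  assumes "ab_param k S Lam" "le_aleph d U" "finite u" "U \<inter> u = {}" "card u + d \<le> k"
  obtains B :: "'s gen set" and \<Psi> where
    "group_hom (subgroup_generated (Gx k Lam a) (G_U k Lam a (U \<union> u))) (free_Abelian_group B) \<Psi>"
    "\<Psi> ` carrier (subgroup_generated (Gx k Lam a) (G_U k Lam a (U \<union> u))) = carrier (free_Abelian_group B)"
    "kernel (subgroup_generated (Gx k Lam a) (G_U k Lam a (U \<union> u))) (free_Abelian_group B) \<Psi>
      = G_Uu k Lam a U u"
proof -
  obtain r m where order: "admissible_order k U u r m"
    using admissible_order_exists[OF assms(2-5)] by blast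
  then obtain N where N: "\<forall>\<eta>\<in>tuples k U u. \<forall>\<rho>\<in>tuples k U u. (\<rho>, \<eta>) \<in> r \<longrightarrow> agree_off (m \<eta>) \<rho> \<eta>
      \<longrightarrow> (\<exists>i<N \<eta>. (\<rho> ! m \<eta>) i \<noteq> (\<eta> ! m \<eta>) i)"
    using admissible_order_separating_levels by blast
  interpret elimination k Lam a U u r m N
  proof
    show "length \<eta> = Suc k" if "\<eta> \<in> Lam" for \<eta> using assms(1) that by (simp add: ab_param_def)
  qed (use assms(4) order N in \<open>auto simp: admissible_order_def\<close>)
  show thesis by (rule G_U_quotient_onto_basis) (rule that)
qed

lemma G_U_quotient_free_abgroup:
  fixes Lam :: "'s tup set"
  assumes "ab_param k S Lam" "le_aleph d U" "finite u" "U \<inter> u = {}" "card u + d \<le> k"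
  shows "free_abgroup (subgroup_generated (Gx k Lam a) (G_U k Lam a (U \<union> u)) Mod G_Uu k Lam a U u)"
proof -
  obtain B :: "'s gen set" and \<Psi> where
    "group_hom (subgroup_generated (Gx k Lam a) (G_U k Lam a (U \<union> u))) (free_Abelian_group B) \<Psi>"
    "\<Psi> ` carrier (subgroup_generated (Gx k Lam a) (G_U k Lam a (U \<union> u))) = carrier (free_Abelian_group B)"
    "kernel (subgroup_generated (Gx k Lam a) (G_U k Lam a (U \<union> u))) (free_Abelian_group B) \<Psi>
      = G_Uu k Lam a U u"
    using G_U_quotient_onto_free[OF assms, where a = a] by metis
  then show ?thesis using group_hom.FactGroup_iso free_abgroupI by metis
qed

lemma G_U_free_abgroup:
  fixes Lam :: "'s tup set"
  assumes "ab_param k S Lam" "le_aleph k U"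
  shows "free_abgroup (subgroup_generated (Gx k Lam a) (G_U k Lam a U))"
proof -
  let ?G = "subgroup_generated (Gx k Lam a) (G_U k Lam a U)"
  obtain B :: "'s gen set" and \<Psi> where "group_hom ?G (free_Abelian_group B) \<Psi>"
    "\<Psi> ` carrier ?G = carrier (free_Abelian_group B)" "kernel ?G (free_Abelian_group B) \<Psi> = G_Uu k Lam a U {}"
    using G_U_quotient_onto_free[OF assms(1,2), where u = "{}" and a = a] by auto
  then have "\<Psi> \<in> iso ?G (free_Abelian_group B)"
    using Gx_presentation.G_Uu_empty by (simp add: iso_kernel_image group_hom_def group_hom_axioms_def)
  then show ?thesis by (intro free_abgroupI) (auto simp: is_iso_def)
qed

theorem claim1p12:
  fixes k :: nat and S :: "'s set" and Lam :: "'s tup set" and a :: "'s tup \<Rightarrow> nat \<Rightarrow> int"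
  assumes "ab_param k S Lam"
  shows "(\<forall>U u j. U \<subseteq> {\<eta>. range \<eta> \<subseteq> S} \<and> u \<subseteq> {\<eta>. range \<eta> \<subseteq> S} - U \<and> finite u
             \<and> j \<le> k \<and> card u \<le> j \<and> le_aleph (k - j) U
           \<longrightarrow> free_abgroup (subgroup_generated (Gx k Lam a) (G_U k Lam a (U \<union> u))
                              Mod G_Uu k Lam a U u))
       \<and> (\<forall>U. U \<subseteq> {\<eta>. range \<eta> \<subseteq> S} \<and> le_aleph k U
           \<longrightarrow> free_abgroup (subgroup_generated (Gx k Lam a) (G_U k Lam a U)))"
proof (intro conjI allI impI)
  fix U u :: "(nat \<Rightarrow> 's) set" and j :: nat
  assume "U \<subseteq> {\<eta>. range \<eta> \<subseteq> S} \<and> u \<subseteq> {\<eta>. range \<eta> \<subseteq> S} - U \<and> finite u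
    \<and> j \<le> k \<and> card u \<le> j \<and> le_aleph (k - j) U"
  then show "free_abgroup (subgroup_generated (Gx k Lam a) (G_U k Lam a (U \<union> u)) Mod G_Uu k Lam a U u)"
    by (intro G_U_quotient_free_abgroup[OF assms, of "k - j"]) auto
next
  fix U :: "(nat \<Rightarrow> 's) set"
  assume "U \<subseteq> {\<eta>. range \<eta> \<subseteq> S} \<and> le_aleph k U"
  then show "free_abgroup (subgroup_generated (Gx k Lam a) (G_U k Lam a U))"
    by (intro G_U_free_abgroup[OF assms]) auto
qed

end
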